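(* Let $\mathfrak B$ and $\mathfrak H$ be Hopf algebras over a field $k$ and let $\wp:\mathfrak B\otimes\mathfrak H\to k$ be a convolution invertible skew pairing. Let $D=D(\mathfrak B,\mathfrak H)$ be the generalized quantum double. Then $D$ is coquasitriangular if and only if both $\mathfrak B$ and $\mathfrak H$ are coquasitriangular.
   Context: Sweedler notation $\Delta(h)=h_1\otimes h_2$ is used. A bilinear form $\langle\,,\rangle:U\otimes V\to k$ between bialgebras is a pairing if $\langle mn,x\rangle=\langle m,x_1\rangle\langle n,x_2\rangle$, $\langle m,xy\rangle=\langle m_1,x\rangle\langle m_2,y\rangle$, $\langle 1,x\rangle=\varepsilon(x)$, $\langle m,1\rangle=\varepsilon(m)$. A skew pairing $\wp:\mathfrak B\otimes\mathfrak H\to k$ is a pairing of $\mathfrak B^{\rm cop}$ and $\mathfrak H$, i.e. $\wp(bb',h)=\wp(b,h_1)\wp(b',h_2)$, $\wp(b,hh')=\wp(b_2,h)\wp(b_1,h')$, $\wp(1,h)=\varepsilon(h)$, $\wp(b,1)=\varepsilon(b)$. The generalized quantum double $D(\mathfrak B,\mathfrak H)$ is the vector space $\mathfrak B\otimes\mathfrak H$ with the tensor product coalgebra structure, unit $1\otimes 1$ and multiplication $(b\otimes h)(b'\otimes h')=\wp(b'_1,h_1)\wp^{-1}(b'_3,h_3)\,bb'_2\otimes h_2h'$, where $\wp^{-1}$ is the convolution inverse of $\wp$; it is a Hopf algebra. A Hopf algebra $H$ is coquasitriangular (CQT) if there is a convolution invertible bilinear map $\sigma:H\otimes H\to k$ with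 $\sigma(hh',g)=\sigma(h,g_1)\sigma(h',g_2)$, $\sigma(g,hh')=\sigma(g_2,h)\sigma(g_1,h')$, $\sigma(1,h)=\sigma(h,1)=\varepsilon(h)$ and $\sigma(h_1,h'_1)h_2h'_2=h'_1h_1\sigma(h_2,h'_2)$ for all $h,h',g\in H$. *)

theory Defs
  imports "HOL-Library.Poly_Mapping"
begin

text \<open>A k-vector space is represented by a basis: the space with basis indexed by
the type 'b is the space of finitely supported functions from b to k.
Tensor products of such spaces are the spaces on product index types.
All structure maps are given on basis vectors and extended (multi)linearly.\<close>

type_synonym ('b,'k) vec = "'b \<Rightarrow>\<^sub>0 'k"

definition bas :: "'b \<Rightarrow> ('b,'k::{zero,one}) vec" where
  "bas x = Poly_Mapping.single x 1"

definition smult :: "'k::semiring_0 \<Rightarrow> ('b,'k) vec \<Rightarrow> ('b,'k) vec" where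
  "smult c v = (\<Sum>a\<in>Poly_Mapping.keys v. Poly_Mapping.single a (c * Poly_Mapping.lookup v a))"

definition lext :: "('a \<Rightarrow> ('c,'k::semiring_0) vec) \<Rightarrow> ('a,'k) vec \<Rightarrow> ('c,'k) vec" where
  "lext f v = (\<Sum>a\<in>Poly_Mapping.keys v. smult (Poly_Mapping.lookup v a) (f a))"

definition lfun :: "('a \<Rightarrow> 'k::semiring_0) \<Rightarrow> ('a,'k) vec \<Rightarrow> 'k" where
  "lfun f v = (\<Sum>a\<in>Poly_Mapping.keys v. Poly_Mapping.lookup v a * f a)"

definition tens :: "('a,'k::semiring_0) vec \<Rightarrow> ('b,'k) vec \<Rightarrow> ('a \<times> 'b,'k) vec" where
  "tens v w = (\<Sum>a\<in>Poly_Mapping.keys v. \<Sum>b\<in>Poly_Mapping.keys w. Poly_Mapping.single (a,b) (Poly_Mapping.lookup v a * Poly_Mapping.lookup w b))"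

declare [[typedef_overloaded]]

record ('b,'k) bialg =
  mult   :: "'b \<Rightarrow> 'b \<Rightarrow> ('b,'k) vec"
  one    :: "('b,'k) vec"
  comult :: "'b \<Rightarrow> ('b \<times> 'b,'k) vec"
  counit :: "'b \<Rightarrow> 'k"

definition mulv :: "('b,'k::semiring_0) bialg \<Rightarrow> ('b,'k) vec \<Rightarrow> ('b,'k) vec \<Rightarrow> ('b,'k) vec" where
  "mulv A v w = lext (\<lambda>(a,b). mult A a b) (tens v w)"

definition comulv :: "('b,'k::semiring_0) bialg \<Rightarrow> ('b,'k) vec \<Rightarrow> ('b \<times> 'b,'k) vec" where
  "comulv A v = lext (comult A) v"

definition comult2 :: "('b,'k::semiring_1) bialg \<Rightarrow> 'b \<Rightarrow> (('b \<times> 'b) \<times> 'b,'k) vec" where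
  "comult2 A x = lext (\<lambda>(a,b). tens (comult A a) (bas b)) (comult A x)"

definition bialgebra :: "('b,'k::field) bialg \<Rightarrow> bool" where
  "bialgebra A \<longleftrightarrow>
     (\<forall>x y z. mulv A (mult A x y) (bas z) = mulv A (bas x) (mult A y z)) \<and>
     (\<forall>x. mulv A (one A) (bas x) = bas x \<and> mulv A (bas x) (one A) = bas x) \<and>
     (\<forall>x. lext (\<lambda>((a,b),c). bas (a,(b,c))) (comult2 A x)
          = lext (\<lambda>(a,b). tens (bas a) (comult A b)) (comult A x)) \<and>
     (\<forall>x. lext (\<lambda>(a,b). smult (counit A a) (bas b)) (comult A x) = bas x \<and>
          lext (\<lambda>(a,b). smult (counit A b) (bas a)) (comult A x) = bas x) \<and>
     (\<forall>x y. comulv A (mult A x y)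
          = lext (\<lambda>((a,b),(c,d)). tens (mult A a c) (mult A b d)) (tens (comult A x) (comult A y))) \<and>
     comulv A (one A) = tens (one A) (one A) \<and>
     (\<forall>x y. lfun (counit A) (mult A x y) = counit A x * counit A y) \<and>
     lfun (counit A) (one A) = 1"

definition is_antipode :: "('b,'k::field) bialg \<Rightarrow> ('b \<Rightarrow> ('b,'k) vec) \<Rightarrow> bool" where
  "is_antipode A S \<longleftrightarrow>
     (\<forall>x. lext (\<lambda>(a,b). mulv A (S a) (bas b)) (comult A x) = smult (counit A x) (one A) \<and>
          lext (\<lambda>(a,b). mulv A (bas a) (S b)) (comult A x) = smult (counit A x) (one A))"

definition hopf_algebra :: "('b,'k::field) bialg \<Rightarrow> bool" where
  "hopf_algebra A \<longleftrightarrow> bialgebra A \<and> (\<exists>S. is_antipode A S)"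

definition conv :: "('b,'k::field) bialg \<Rightarrow> ('c,'k) bialg \<Rightarrow>
    ('b \<Rightarrow> 'c \<Rightarrow> 'k) \<Rightarrow> ('b \<Rightarrow> 'c \<Rightarrow> 'k) \<Rightarrow> 'b \<Rightarrow> 'c \<Rightarrow> 'k" where
  "conv B H s t x y = lfun (\<lambda>((a,b),(c,d)). s a c * t b d) (tens (comult B x) (comult H y))"

definition conv_inverse :: "('b,'k::field) bialg \<Rightarrow> ('c,'k) bialg \<Rightarrow>
    ('b \<Rightarrow> 'c \<Rightarrow> 'k) \<Rightarrow> ('b \<Rightarrow> 'c \<Rightarrow> 'k) \<Rightarrow> bool" where
  "conv_inverse B H s t \<longleftrightarrow>
     (\<forall>x y. conv B H s t x y = counit B x * counit H y \<and> conv B H t s x y = counit B x * counit H y)"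

definition conv_invertible :: "('b,'k::field) bialg \<Rightarrow> ('c,'k) bialg \<Rightarrow>
    ('b \<Rightarrow> 'c \<Rightarrow> 'k) \<Rightarrow> bool" where
  "conv_invertible B H s \<longleftrightarrow> (\<exists>t. conv_inverse B H s t)"

definition skew_pairing :: "('b,'k::field) bialg \<Rightarrow> ('c,'k) bialg \<Rightarrow>
    ('b \<Rightarrow> 'c \<Rightarrow> 'k) \<Rightarrow> bool" where
  "skew_pairing B H p \<longleftrightarrow>
     (\<forall>x x' y. lfun (\<lambda>a. p a y) (mult B x x') = lfun (\<lambda>(c,d). p x c * p x' d) (comult H y)) \<and>
     (\<forall>x y y'. lfun (\<lambda>c. p x c) (mult H y y') = lfun (\<lambda>(a,b). p b y * p a y') (comult B x)) \<and>
     (\<forall>y. lfun (\<lambda>a. p a y) (one B) = counit H y) \<and>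
     (\<forall>x. lfun (\<lambda>c. p x c) (one H) = counit B x)"

definition cqt_form :: "('b,'k::field) bialg \<Rightarrow> ('b \<Rightarrow> 'b \<Rightarrow> 'k) \<Rightarrow> bool" where
  "cqt_form H s \<longleftrightarrow>
     conv_invertible H H s \<and>
     (\<forall>h h' g. lfun (\<lambda>a. s a g) (mult H h h') = lfun (\<lambda>(c,d). s h c * s h' d) (comult H g)) \<and>
     (\<forall>g h h'. lfun (\<lambda>c. s g c) (mult H h h') = lfun (\<lambda>(a,b). s b h * s a h') (comult H g)) \<and>
     (\<forall>h. lfun (\<lambda>a. s a h) (one H) = counit H h \<and> lfun (\<lambda>c. s h c) (one H) = counit H h) \<and>
     (\<forall>h h'. lext (\<lambda>((a,b),(c,d)). smult (s a c) (mult H b d)) (tens (comult H h) (comult H h'))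
           = lext (\<lambda>((a,b),(c,d)). smult (s b d) (mult H c a)) (tens (comult H h) (comult H h')))"

definition coquasitriangular :: "('b,'k::field) bialg \<Rightarrow> bool" where
  "coquasitriangular H \<longleftrightarrow> (\<exists>s. cqt_form H s)"

text \<open>The generalized quantum double D(B,H) on the basis type 'b \<times> 'c (the space B \<otimes> H),
 with tensor product coalgebra, unit 1 \<otimes> 1 and multiplication
 (b \<otimes> h)(b' \<otimes> h') = p(b'_1,h_1) q(b'_3,h_3) b b'_2 \<otimes> h_2 h', where q is the convolution inverse of p.\<close>
definition gen_double :: "('b,'k::field) bialg \<Rightarrow> ('c,'k) bialg \<Rightarrow>
    ('b \<Rightarrow> 'c \<Rightarrow> 'k) \<Rightarrow> ('b \<Rightarrow> 'c \<Rightarrow> 'k) \<Rightarrow> ('b \<times> 'c,'k) bialg" where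
  "gen_double B H p q =
    \<lparr> mult = (\<lambda>(x,y) (x',y').
        lext (\<lambda>(((a1,a2),a3),((c1,c2),c3)).
                smult (p a1 c1 * q a3 c3) (tens (mult B x a2) (mult H c2 y')))
             (tens (comult2 B x') (comult2 H y))),
      one = tens (one B) (one H),
      comult = (\<lambda>(x,y). lext (\<lambda>((a,b),(c,d)). bas ((a,c),(b,d))) (tens (comult B x) (comult H y))),
      counit = (\<lambda>(x,y). counit B x * counit H y) \<rparr>"

end

(*
  If sigma_B and sigma_H are coquasitriangular structures on B and H, then

    sigma(x (x) y, x' (x) y') = p(x_1, y'_1) sigma_B(x_2, x'_1) sigma_H(y_1, y'_2) q(x'_2, y_2)

  is one on the double D. In the convolution algebra of D (x) D this form is a product of four
  forms lifted from B (x) H, B (x) B, H (x) H, and the multiplication of D is the product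
  m_B (x) m_H of the tensor product algebra conjugated by the lifts of p and q. After p and q
  cancel, the braiding identity for sigma reduces to those of sigma_B and sigma_H. Multiplicativity
  of sigma in each argument is checked on the factorisation
  sigma(x (x) y, Z) = sigma(x (x) 1, Z_1) sigma(1 (x) y, Z_2) (and its analogue in the second
  argument), using that the inverse q is, like p, multiplicative in each variable up to order.

  Conversely, a coquasitriangular structure sigma on D restricts to the sub-bialgebras B (x) 1 and
  1 (x) H (they are closed under multiplication because p(1, -) and p(-, 1) are counits):
  sigma_B(x, x') = sigma(x (x) 1, x' (x) 1) and sigma_H(y, y') = sigma(1 (x) y, 1 (x) y').
*)

theory Submission
  imports Defs
begin

lemma lfun_eq_sum:
  assumes "finite S" "Poly_Mapping.keys v \<subseteq> S"
  shows "lfun f v = (\<Sum>a\<in>S. Poly_Mapping.lookup v a * f a)"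
  unfolding lfun_def
  by (rule sum.mono_neutral_left) (use assms in \<open>auto simp: in_keys_iff\<close>)

lemma lookup_smult [simp]: "Poly_Mapping.lookup (smult c v) z = c * Poly_Mapping.lookup v z"
  unfolding smult_def lookup_sum lookup_single
  by (cases "z \<in> Poly_Mapping.keys v") (auto simp: when_def in_keys_iff)

lemma lfun_smult [simp]: "lfun (f::_\<Rightarrow>'k::comm_semiring_0) (smult c v) = c * lfun f v"
proof -
  have "Poly_Mapping.keys (smult c v) \<subseteq> Poly_Mapping.keys v"
    by (auto simp: in_keys_iff)
  then show ?thesis
    by (subst lfun_eq_sum) (auto simp: lfun_def sum_distrib_left ac_simps)
qed

lemma lfun_add [simp]: "lfun f (v + w) = lfun f v + lfun f w"
proof -
  let ?S = "Poly_Mapping.keys v \<union> Poly_Mapping.keys w"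
  have "lfun f (v + w) = (\<Sum>a\<in>?S. Poly_Mapping.lookup (v + w) a * f a)"
    by (rule lfun_eq_sum) (auto simp: in_keys_iff lookup_add)
  also have "\<dots> = (\<Sum>a\<in>?S. Poly_Mapping.lookup v a * f a) + (\<Sum>a\<in>?S. Poly_Mapping.lookup w a * f a)"
    by (simp add: lookup_add distrib_right sum.distrib)
  also have "\<dots> = lfun f v + lfun f w"
    by (subst (1 2) lfun_eq_sum[symmetric]) auto
  finally show ?thesis .
qed

lemma lfun_zero [simp]: "lfun f 0 = 0"
  by (simp add: lfun_def)

lemma lfun_sum: "lfun f (sum g S) = (\<Sum>i\<in>S. lfun f (g i))"
  by (induction S rule: infinite_finite_induct) auto

lemma lfun_lext [simp]: "lfun (f::_\<Rightarrow>'k::comm_semiring_0) (lext g v) = lfun (\<lambda>a. lfun f (g a)) v"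
  by (simp add: lext_def lfun_sum) (simp add: lfun_def)

lemma lfun_bas [simp]: "lfun f (bas x) = (f x::'k::semiring_1)"
  by (subst lfun_eq_sum[of "{x}"]) (auto simp: bas_def lookup_single in_keys_iff)

lemma lookup_tens [simp]:
  "Poly_Mapping.lookup (tens v w) (a,b) = Poly_Mapping.lookup v a * Poly_Mapping.lookup w b"
proof -
  have "Poly_Mapping.lookup (tens v w) (a,b) =
      (\<Sum>x\<in>Poly_Mapping.keys v. \<Sum>y\<in>Poly_Mapping.keys w.
         (Poly_Mapping.lookup v x * Poly_Mapping.lookup w y when (x,y) = (a,b)))"
    by (simp add: tens_def lookup_sum lookup_single)
  also have "\<dots> = (\<Sum>x\<in>Poly_Mapping.keys v. if x = a then (\<Sum>y\<in>Poly_Mapping.keys w.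
         if y = b then Poly_Mapping.lookup v x * Poly_Mapping.lookup w y else 0) else 0)"
    by (rule sum.cong) (auto simp: when_def intro!: sum.cong)
  also have "\<dots> = Poly_Mapping.lookup v a * Poly_Mapping.lookup w b"
    by (simp add: sum.delta' in_keys_iff)
  finally show ?thesis .
qed

lemma lfun_tens [simp]:
  "lfun (f::_\<Rightarrow>'k::comm_semiring_0) (tens v w) = lfun (\<lambda>a. lfun (\<lambda>b. f (a,b)) w) v"
proof -
  let ?K = "Poly_Mapping.keys v \<times> Poly_Mapping.keys w"
  have "lfun f (tens v w) = (\<Sum>z\<in>?K. Poly_Mapping.lookup (tens v w) z * f z)"
    by (rule lfun_eq_sum) (auto simp: in_keys_iff)
  also have "\<dots> = (\<Sum>(a,b)\<in>?K. Poly_Mapping.lookup v a * (Poly_Mapping.lookup w b * f (a,b)))"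
    by (rule sum.cong) (auto simp: mult.assoc)
  also have "\<dots> = lfun (\<lambda>a. lfun (\<lambda>b. f (a,b)) w) v"
    by (simp add: sum.cartesian_product[symmetric] lfun_def sum_distrib_left)
  finally show ?thesis .
qed

lemma lfun_cmult_left [simp]: "lfun (\<lambda>a. (c::'k::comm_semiring_0) * f a) v = c * lfun f v"
  by (simp add: lfun_def sum_distrib_left ac_simps)

lemma lfun_cmult_right [simp]: "lfun (\<lambda>a. f a * (c::'k::comm_semiring_0)) v = lfun f v * c"
  by (simp add: lfun_def sum_distrib_right ac_simps)

lemma lfun_swap:
  "lfun (\<lambda>a. lfun (f a) w) v = lfun (\<lambda>b. lfun (\<lambda>a. f a b) v) (w::_ \<Rightarrow>\<^sub>0 'k::comm_semiring_0)"
  by (simp add: lfun_def sum_distrib_left sum_distrib_right ac_simps sum.swap[of _ "Poly_Mapping.keys v"])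

lemma lookup_eq_lfun: "Poly_Mapping.lookup (v::_\<Rightarrow>\<^sub>0'k::semiring_1) z = lfun (\<lambda>a. if a = z then 1 else 0) v"
  by (subst lfun_eq_sum[of "Poly_Mapping.keys v \<union> {z}"]) (auto simp: in_keys_iff if_distrib cong: if_cong)

lemma vec_eq_lfunI: "(\<And>f. lfun f (v::_\<Rightarrow>\<^sub>0'k::semiring_1) = lfun f w) \<Longrightarrow> v = w"
  by (rule poly_mapping_eqI) (simp add: lookup_eq_lfun)

lemma lfun_mulv [simp]:
  "lfun (f::_\<Rightarrow>'k::field) (mulv A v w) = lfun (\<lambda>a. lfun (\<lambda>b. lfun f (mult A a b)) w) v"
  by (simp add: mulv_def case_prod_beta)

lemma lfun_comulv [simp]: "lfun (f::_\<Rightarrow>'k::field) (comulv A v) = lfun (\<lambda>a. lfun f (comult A a)) v"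
  by (simp add: comulv_def)

lemma lfun_comult2 [simp]:
  "lfun (f::_\<Rightarrow>'k::field) (comult2 A x) = lfun (\<lambda>(a,b). lfun (\<lambda>c. f (c, b)) (comult A a)) (comult A x)"
  by (simp add: comult2_def case_prod_unfold)

section \<open>Sweedler notation as evaluation of functionals\<close>

text \<open>Identities between vectors are proved by testing them against all functionals
  (\<open>vec_eq_lfunI\<close>).  Thus \<open>sweedler V x F\<close> stands for \<open>F x\<^sub>1 x\<^sub>2\<close> (summed over
  \<open>V x = x\<^sub>1 \<otimes> x\<^sub>2\<close>), and \<open>at_mult A x y f\<close>, \<open>at_one A f\<close> for \<open>f(x y)\<close>, \<open>f(1)\<close>.\<close>

definition sweedler :: "('x \<Rightarrow> ('x \<times> 'x,'k::comm_semiring_0) vec) \<Rightarrow> 'x \<Rightarrow> ('x \<Rightarrow> 'x \<Rightarrow> 'k) \<Rightarrow> 'k" where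
  "sweedler V x F = lfun (\<lambda>(a,b). F a b) (V x)"

abbreviation sw :: "('b,'k::comm_semiring_0) bialg \<Rightarrow> 'b \<Rightarrow> ('b \<Rightarrow> 'b \<Rightarrow> 'k) \<Rightarrow> 'k" where
  "sw A \<equiv> sweedler (comult A)"

definition at_mult :: "('b,'k::comm_semiring_0) bialg \<Rightarrow> 'b \<Rightarrow> 'b \<Rightarrow> ('b \<Rightarrow> 'k) \<Rightarrow> 'k" where
  "at_mult A x y f = lfun f (mult A x y)"

definition at_one :: "('b,'k::comm_semiring_0) bialg \<Rightarrow> ('b \<Rightarrow> 'k) \<Rightarrow> 'k" where
  "at_one A f = lfun f (one A)"

lemma sweedler_cmult_left [simp]: "sweedler V x (\<lambda>a b. c * F a b) = c * sweedler V x F"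
  using lfun_cmult_left[of c "\<lambda>(a,b). F a b"] by (simp add: sweedler_def case_prod_unfold)

lemma sweedler_cmult_right [simp]: "sweedler V x (\<lambda>a b. F a b * c) = sweedler V x F * c"
  using lfun_cmult_right[of "\<lambda>(a,b). F a b" c] by (simp add: sweedler_def case_prod_unfold)

lemmas sweedler_absorb_left = sweedler_cmult_left[symmetric]
lemmas sweedler_absorb_right = sweedler_cmult_right[symmetric]

lemma at_mult_cmult_left [simp]: "at_mult A x y (\<lambda>a. c * f a) = c * at_mult A x y f"
  by (simp add: at_mult_def)
lemma at_mult_cmult_right [simp]: "at_mult A x y (\<lambda>a. f a * c) = at_mult A x y f * c"
  by (simp add: at_mult_def)
lemma at_one_cmult_left [simp]: "at_one A (\<lambda>a. c * f a) = c * at_one A f"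
  by (simp add: at_one_def)
lemma at_one_cmult_right [simp]: "at_one A (\<lambda>a. f a * c) = at_one A f * c"
  by (simp add: at_one_def)

lemma sweedler_swap:
  "sweedler V x (\<lambda>a b. sweedler W y (F a b)) = sweedler W y (\<lambda>c d. sweedler V x (\<lambda>a b. F a b c d))"
  unfolding sweedler_def case_prod_unfold by (rule lfun_swap)
lemma sweedler_swap_factors:
  "sweedler V x (\<lambda>a b. sweedler V b (\<lambda>c d. sweedler V a (\<lambda>e f. G e f c d)))
   = sweedler V x (\<lambda>a b. sweedler V a (\<lambda>e f. sweedler V b (\<lambda>c d. G e f c d)))"
  by (rule arg_cong[where f = "sweedler V x"], rule ext, rule ext, rule sweedler_swap)

lemma sweedler_at_mult_swap:
  "sweedler V x (\<lambda>a b. at_mult C y z (F a b)) = at_mult C y z (\<lambda>c. sweedler V x (\<lambda>a b. F a b c))"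
  unfolding sweedler_def at_mult_def case_prod_unfold by (rule lfun_swap)
lemma sweedler_at_one_swap:
  "sweedler V x (\<lambda>a b. at_one C (F a b)) = at_one C (\<lambda>c. sweedler V x (\<lambda>a b. F a b c))"
  unfolding sweedler_def at_one_def case_prod_unfold by (rule lfun_swap)
lemma at_mult_swap:
  "at_mult A x y (\<lambda>a. at_mult C z w (F a)) = at_mult C z w (\<lambda>c. at_mult A x y (\<lambda>a. F a c))"
  unfolding at_mult_def by (rule lfun_swap)
lemma at_mult_at_one_swap:
  "at_mult A x y (\<lambda>a. at_one C (F a)) = at_one C (\<lambda>c. at_mult A x y (\<lambda>a. F a c))"
  unfolding at_mult_def at_one_def by (rule lfun_swap)
lemma at_one_swap: "at_one A (\<lambda>a. at_one C (F a)) = at_one C (\<lambda>c. at_one A (\<lambda>a. F a c))"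
  unfolding at_one_def by (rule lfun_swap)

section \<open>Coalgebras and convolution\<close>

locale coalgebra =
  fixes V :: "'x \<Rightarrow> ('x \<times> 'x, 'k::comm_semiring_1) vec" and e :: "'x \<Rightarrow> 'k"
  assumes coassoc:
    "sweedler V x (\<lambda>a b. sweedler V a (\<lambda>c d. F c d b)) = sweedler V x (\<lambda>a b. sweedler V b (\<lambda>c d. F a c d))"
    and counit_left [simp]: "sweedler V x (\<lambda>a b. e a * f b) = f x"
    and counit_right [simp]: "sweedler V x (\<lambda>a b. f a * e b) = f x"
begin

lemma counit_right' [simp]: "sweedler V x (\<lambda>a b. e b * f a) = f x"
  using counit_right[of x f] by (simp add: mult.commute)

lemma coassoc4_nest:
  "sweedler V x (\<lambda>x1 x2. sweedler V x1 (\<lambda>a b. sweedler V x2 (\<lambda>c d. F a b c d)))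
   = sweedler V x (\<lambda>a r. sweedler V r (\<lambda>m d. sweedler V m (\<lambda>b c. F a b c d)))"
proof -
  have "sweedler V x (\<lambda>x1 x2. sweedler V x1 (\<lambda>a b. sweedler V x2 (\<lambda>c d. F a b c d)))
      = sweedler V x (\<lambda>a r. sweedler V r (\<lambda>b x2. sweedler V x2 (\<lambda>c d. F a b c d)))"
    by (rule coassoc)
  also have "\<dots> = sweedler V x (\<lambda>a r. sweedler V r (\<lambda>m d. sweedler V m (\<lambda>b c. F a b c d)))"
    by (subst coassoc) (rule refl)
  finally show ?thesis .
qed

lemma coassoc4_split:
  "sweedler V x (\<lambda>a a3. sweedler V a (\<lambda>a1 a2. sweedler V a2 (\<lambda>b1 b2. F a1 b1 b2 a3)))
   = sweedler V x (\<lambda>X X'. sweedler V X (\<lambda>a1 b1. sweedler V X' (\<lambda>b2 a3. F a1 b1 b2 a3)))"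
  by (simp only: coassoc)

end

definition convolution :: "('x \<Rightarrow> ('x \<times> 'x, 'k::comm_semiring_0) vec) \<Rightarrow> ('x \<Rightarrow> 'k) \<Rightarrow> ('x \<Rightarrow> 'k) \<Rightarrow> 'x \<Rightarrow> 'k" where
  "convolution V f g x = sweedler V x (\<lambda>a b. f a * g b)"

context coalgebra
begin

lemma convolution_assoc: "convolution V (convolution V f g) h = convolution V f (convolution V g h)"
proof
  fix x
  have "convolution V (convolution V f g) h x = sweedler V x (\<lambda>a b. sweedler V a (\<lambda>c d. f c * g d * h b))"
    by (simp add: convolution_def)
  also have "\<dots> = sweedler V x (\<lambda>a b. sweedler V b (\<lambda>c d. f a * g c * h d))"
    by (rule coassoc)
  also have "\<dots> = convolution V f (convolution V g h) x"
    by (simp add: convolution_def mult.assoc)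
  finally show "convolution V (convolution V f g) h x = convolution V f (convolution V g h) x" .
qed

lemma convolution_unit_right [simp]: "convolution V f e = f"
  by (simp add: convolution_def fun_eq_iff)

lemma convolution_unit_left [simp]: "convolution V e f = f"
  by (simp add: convolution_def fun_eq_iff)

lemma convolution_inverse_unique:
  assumes "convolution V f g = e" "convolution V h f = e"
  shows "h = g"
  by (metis assms convolution_assoc convolution_unit_left convolution_unit_right)

end

definition tensor_comult :: "('x \<Rightarrow> ('x \<times> 'x, 'k::comm_semiring_1) vec) \<Rightarrow> ('y \<Rightarrow> ('y \<times> 'y, 'k) vec) \<Rightarrow>
    'x \<times> 'y \<Rightarrow> (('x \<times> 'y) \<times> ('x \<times> 'y), 'k) vec" where
  "tensor_comult V W = (\<lambda>(x,y). lext (\<lambda>((a,b),(c,d)). bas ((a,c),(b,d))) (tens (V x) (W y)))"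

lemma sweedler_tensor_comult [simp]:
  "sweedler (tensor_comult V W) (x,y) F = sweedler V x (\<lambda>a b. sweedler W y (\<lambda>c d. F (a,c) (b,d)))"
  by (simp add: tensor_comult_def sweedler_def case_prod_unfold)

lemma coalgebra_tensor:
  fixes V :: "'x \<Rightarrow> ('x \<times> 'x, 'k::comm_semiring_1) vec" and W :: "'y \<Rightarrow> ('y \<times> 'y, 'k) vec"
  assumes V: "coalgebra V e" and W: "coalgebra W e'"
  shows "coalgebra (tensor_comult V W) (\<lambda>(x,y). e x * e' y)"
proof
  fix z :: "'x \<times> 'y" and F
  obtain x y where z: "z = (x,y)" by (cases z)
  have "sweedler V x (\<lambda>a b. sweedler W y (\<lambda>c d. sweedler V a (\<lambda>a1 a2.
          sweedler W c (\<lambda>c1 c2. F (a1,c1) (a2,c2) (b,d)))))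
      = sweedler V x (\<lambda>a b. sweedler V a (\<lambda>a1 a2. sweedler W y (\<lambda>c d.
          sweedler W c (\<lambda>c1 c2. F (a1,c1) (a2,c2) (b,d)))))"
    by (rule arg_cong[where f = "sweedler V x"], rule ext, rule ext, rule sweedler_swap)
  also have "\<dots> = sweedler V x (\<lambda>a b. sweedler V a (\<lambda>a1 a2. sweedler W y (\<lambda>c d.
      sweedler W d (\<lambda>c1 c2. F (a1,c) (a2,c1) (b,c2)))))"
    by (simp only: coalgebra.coassoc[OF W])
  also have "\<dots> = sweedler V x (\<lambda>a b. sweedler V b (\<lambda>a1 a2. sweedler W y (\<lambda>c d.
      sweedler W d (\<lambda>c1 c2. F (a,c) (a1,c1) (a2,c2)))))"
    by (rule coalgebra.coassoc[OF V])
  also have "\<dots> = sweedler V x (\<lambda>a b. sweedler W y (\<lambda>c d. sweedler V b (\<lambda>a1 a2.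
      sweedler W d (\<lambda>c1 c2. F (a,c) (a1,c1) (a2,c2)))))"
    by (rule arg_cong[where f = "sweedler V x"], rule ext, rule ext, rule sweedler_swap)
  finally show "sweedler (tensor_comult V W) z (\<lambda>a b. sweedler (tensor_comult V W) a (\<lambda>c d. F c d b)) =
      sweedler (tensor_comult V W) z (\<lambda>a b. sweedler (tensor_comult V W) b (\<lambda>c d. F a c d))"
    by (simp add: z case_prod_unfold)
next
  fix z :: "'x \<times> 'y" and f
  show "sweedler (tensor_comult V W) z (\<lambda>a b. (case a of (x, y) \<Rightarrow> e x * e' y) * f b) = f z"
    by (cases z) (simp add: mult.assoc coalgebra.counit_left[OF V] coalgebra.counit_left[OF W])
  show "sweedler (tensor_comult V W) z (\<lambda>a b. f a * (case b of (x, y) \<Rightarrow> e x * e' y)) = f z"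
    by (cases z) (simp add: mult.assoc[symmetric] coalgebra.counit_right[OF V] coalgebra.counit_right[OF W])
qed

locale bialgebra_structure =
  fixes A :: "('b,'k::field) bialg"
  assumes bialgebra: "bialgebra A"
begin

lemma coalgebra: "coalgebra (comult A) (counit A)"
proof
  fix x F
  have "lext (\<lambda>((a,b),c). bas (a,(b,c))) (comult2 A x) = lext (\<lambda>(a,b). tens (bas a) (comult A b)) (comult A x)"
    using bialgebra by (simp add: bialgebra_def)
  then have "lfun (\<lambda>(a,b,c). F a b c) (lext (\<lambda>((a,b),c). bas (a,(b,c))) (comult2 A x)) =
             lfun (\<lambda>(a,b,c). F a b c) (lext (\<lambda>(a,b). tens (bas a) (comult A b)) (comult A x))"
    by simp
  then show "sw A x (\<lambda>a b. sw A a (\<lambda>c d. F c d b)) = sw A x (\<lambda>a b. sw A b (\<lambda>c d. F a c d))"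
    by (simp add: sweedler_def case_prod_unfold)
next
  fix x f
  have "lext (\<lambda>(a,b). smult (counit A a) (bas b)) (comult A x) = bas x"
       "lext (\<lambda>(a,b). smult (counit A b) (bas a)) (comult A x) = bas x"
    using bialgebra by (simp_all add: bialgebra_def)
  then have "lfun f (lext (\<lambda>(a,b). smult (counit A a) (bas b)) (comult A x)) = f x"
            "lfun f (lext (\<lambda>(a,b). smult (counit A b) (bas a)) (comult A x)) = f x"
    by simp_all
  then show "sw A x (\<lambda>a b. counit A a * f b) = f x" "sw A x (\<lambda>a b. f a * counit A b) = f x"
    by (simp_all add: sweedler_def case_prod_unfold mult.commute)
qed

sublocale coalgebra "comult A" "counit A"
  by (rule coalgebra)

lemma at_mult_sw:
  "at_mult A x y (\<lambda>e. sw A e F) = sw A x (\<lambda>a b. sw A y (\<lambda>c d. at_mult A a c (\<lambda>e. at_mult A b d (F e))))"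
proof -
  have "comulv A (mult A x y) = lext (\<lambda>((a,b),(c,d)). tens (mult A a c) (mult A b d)) (tens (comult A x) (comult A y))"
    using bialgebra by (simp add: bialgebra_def)
  then have "lfun (\<lambda>(a,b). F a b) (comulv A (mult A x y)) =
      lfun (\<lambda>(a,b). F a b) (lext (\<lambda>((a,b),(c,d)). tens (mult A a c) (mult A b d)) (tens (comult A x) (comult A y)))"
    by simp
  then show ?thesis by (simp add: at_mult_def sweedler_def case_prod_unfold)
qed

lemma at_one_sw: "at_one A (\<lambda>e. sw A e F) = at_one A (\<lambda>a. at_one A (F a))"
proof -
  have "comulv A (one A) = tens (one A) (one A)"
    using bialgebra by (simp add: bialgebra_def)
  then have "lfun (\<lambda>(a,b). F a b) (comulv A (one A)) = lfun (\<lambda>(a,b). F a b) (tens (one A) (one A))" by simp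
  then show ?thesis by (simp add: at_one_def sweedler_def case_prod_unfold)
qed

lemma at_one_mult_left [simp]: "at_one A (\<lambda>a. at_mult A a x f) = f x"
proof -
  have "mulv A (one A) (bas x) = bas x"
    using bialgebra by (simp add: bialgebra_def)
  then have "lfun f (mulv A (one A) (bas x)) = f x" by simp
  then show ?thesis by (simp add: at_mult_def at_one_def)
qed

lemma at_one_mult_right [simp]: "at_one A (\<lambda>a. at_mult A x a f) = f x"
proof -
  have "mulv A (bas x) (one A) = bas x"
    using bialgebra by (simp add: bialgebra_def)
  then have "lfun f (mulv A (bas x) (one A)) = f x" by simp
  then show ?thesis by (simp add: at_mult_def at_one_def)
qed

lemma at_mult_counit [simp]: "at_mult A x y (counit A) = counit A x * counit A y"
  using bialgebra by (simp add: bialgebra_def at_mult_def)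

lemma at_one_counit [simp]: "at_one A (counit A) = 1"
  using bialgebra by (simp add: bialgebra_def at_one_def)

end

section \<open>A skew pairing and its convolution inverse\<close>

locale skew_paired = B: bialgebra_structure B + H: bialgebra_structure H
  for B :: "('b,'k::field) bialg" and H :: "('c,'k) bialg" +
  fixes p q :: "'b \<Rightarrow> 'c \<Rightarrow> 'k"
  assumes skew_pairing: "skew_pairing B H p"
    and conv_inverse: "conv_inverse B H p q"
begin

lemmas swap_B_H = sweedler_swap[of "comult B" _ "comult H"]

lemma pairing_mult_left: "at_mult B x x' (\<lambda>a. p a y) = sw H y (\<lambda>c d. p x c * p x' d)"
  using skew_pairing by (simp add: skew_pairing_def at_mult_def sweedler_def case_prod_unfold)

lemma pairing_mult_right: "at_mult H y y' (p x) = sw B x (\<lambda>a b. p b y * p a y')"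
  using skew_pairing by (simp add: skew_pairing_def at_mult_def sweedler_def case_prod_unfold)

lemma pairing_one_left [simp]: "at_one B (\<lambda>a. p a y) = counit H y"
  using skew_pairing by (simp add: skew_pairing_def at_one_def)

lemma pairing_one_right [simp]: "at_one H (p x) = counit B x"
  using skew_pairing by (simp add: skew_pairing_def at_one_def)

lemma conv_pairing_inverse: "sw B x (\<lambda>a b. sw H y (\<lambda>c d. p a c * q b d)) = counit B x * counit H y"
  using conv_inverse by (simp add: conv_inverse_def conv_def sweedler_def case_prod_unfold)

lemma conv_inverse_pairing: "sw B x (\<lambda>a b. sw H y (\<lambda>c d. q a c * p b d)) = counit B x * counit H y"
  using conv_inverse by (simp add: conv_inverse_def conv_def sweedler_def case_prod_unfold)

lemma conv_inverse_pairing_swapped: "sw H y (\<lambda>c d. sw B x (\<lambda>a b. q a c * p b d)) = counit B x * counit H y"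
  using conv_inverse_pairing by (simp only: swap_B_H)

lemma inverse_one_right [simp]: "at_one H (q x) = counit B x"
proof -
  have "counit B x = at_one H (\<lambda>y. sw B x (\<lambda>a b. sw H y (\<lambda>c d. p a c * q b d)))"
    by (simp add: conv_pairing_inverse)
  also have "\<dots> = sw B x (\<lambda>a b. counit B a * at_one H (q b))"
    by (simp add: sweedler_at_one_swap[symmetric] H.at_one_sw)
  finally show ?thesis by simp
qed

lemma inverse_one_left [simp]: "at_one B (\<lambda>a. q a y) = counit H y"
proof -
  have "counit H y = at_one B (\<lambda>x. sw B x (\<lambda>a b. sw H y (\<lambda>c d. p a c * q b d)))"
    by (simp add: conv_pairing_inverse)
  also have "\<dots> = sw H y (\<lambda>c d. at_one B (\<lambda>a. at_one B (\<lambda>b. p a c * q b d)))"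
    by (simp only: B.at_one_sw sweedler_at_one_swap[symmetric])
  finally show ?thesis by simp
qed

lemma left_inverse_of_pairing_mult_right:
  "sw B x (\<lambda>a b. sw H y (\<lambda>c d. sw H y' (\<lambda>c' d'. sw B a (\<lambda>a1 a2. q a1 c * q a2 c') * at_mult H d d' (p b))))
   = counit B x * (counit H y * counit H y')"
proof -
  have "sw B x (\<lambda>a b. sw H y (\<lambda>c d. sw H y' (\<lambda>c' d'. sw B a (\<lambda>a1 a2. q a1 c * q a2 c') * at_mult H d d' (p b))))
      = sw B x (\<lambda>a b. sw B a (\<lambda>a1 a2. sw B b (\<lambda>b1 b2.
          sw H y (\<lambda>c d. sw H y' (\<lambda>c' d'. q a1 c * (q a2 c' * (p b2 d * p b1 d')))))))"
    by (simp only: pairing_mult_right, (simp only: sweedler_absorb_right swap_B_H)?,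
        (simp only: sweedler_absorb_left swap_B_H mult.assoc mult.commute mult.left_commute)?)
  also have "\<dots> = sw B x (\<lambda>a1 r. sw B r (\<lambda>m b2. sw B m (\<lambda>a2 b1.
      sw H y (\<lambda>c d. sw H y' (\<lambda>c' d'. q a1 c * (q a2 c' * (p b2 d * p b1 d')))))))"
    by (rule B.coassoc4_nest)
  also have "\<dots> = sw B x (\<lambda>a1 r. sw B r (\<lambda>m b2. sw H y (\<lambda>c d. q a1 c * p b2 d *
      sw B m (\<lambda>a2 b1. sw H y' (\<lambda>c' d'. q a2 c' * p b1 d')))))"
    by ((simp only: sweedler_absorb_right swap_B_H)?,
        (simp only: sweedler_absorb_left swap_B_H mult.assoc mult.commute mult.left_commute)?)
  also have "\<dots> = sw B x (\<lambda>a1 r. sw B r (\<lambda>m b2. counit B m * (counit H y' * sw H y (\<lambda>c d. q a1 c * p b2 d))))"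
    by (simp only: conv_inverse_pairing) (simp add: ac_simps)
  also have "\<dots> = counit H y' * sw B x (\<lambda>a b. sw H y (\<lambda>c d. q a c * p b d))"
    by simp
  finally show ?thesis
    by (simp add: conv_inverse_pairing)
qed

lemma left_inverse_of_pairing_mult_left:
  "sw H y (\<lambda>y1 y2. sw B x (\<lambda>x1 x2. sw B x' (\<lambda>x1' x2'. sw H y1 (\<lambda>c d. q x1 d * q x1' c) * at_mult B x2 x2' (\<lambda>a. p a y2))))
   = counit H y * (counit B x * counit B x')"
proof -
  have "sw H y (\<lambda>y1 y2. sw B x (\<lambda>x1 x2. sw B x' (\<lambda>x1' x2'. sw H y1 (\<lambda>c d. q x1 d * q x1' c) * at_mult B x2 x2' (\<lambda>a. p a y2))))
      = sw H y (\<lambda>y1 y2. sw H y1 (\<lambda>c1 d1. sw H y2 (\<lambda>c2 d2.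
          sw B x (\<lambda>x1 x2. sw B x' (\<lambda>x1' x2'. q x1 d1 * (q x1' c1 * (p x2 c2 * p x2' d2)))))))"
    by (simp only: pairing_mult_left, (simp only: sweedler_absorb_right swap_B_H)?,
        (simp only: sweedler_absorb_left swap_B_H mult.assoc)?)
  also have "\<dots> = sw H y (\<lambda>c1 r. sw H r (\<lambda>m d2. sw H m (\<lambda>d1 c2.
      sw B x (\<lambda>x1 x2. sw B x' (\<lambda>x1' x2'. q x1 d1 * (q x1' c1 * (p x2 c2 * p x2' d2)))))))"
    by (rule H.coassoc4_nest)
  also have "\<dots> = sw H y (\<lambda>c1 r. sw H r (\<lambda>m d2. sw B x' (\<lambda>x1' x2'. q x1' c1 * p x2' d2 *
      sw H m (\<lambda>d1 c2. sw B x (\<lambda>x1 x2. q x1 d1 * p x2 c2)))))"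
    by ((simp only: sweedler_absorb_right swap_B_H sweedler_swap[of "comult B" x' "comult B" x])?,
        (simp only: sweedler_absorb_left swap_B_H sweedler_swap[of "comult B" x' "comult B" x]
           mult.assoc mult.commute mult.left_commute)?)
  also have "\<dots> = sw H y (\<lambda>c1 r. sw H r (\<lambda>m d2. counit H m * sw B x' (\<lambda>x1' x2'. q x1' c1 * p x2' d2))) * counit B x"
    by (simp only: conv_inverse_pairing_swapped) (simp add: ac_simps)
  also have "\<dots> = sw H y (\<lambda>c1 r. sw B x' (\<lambda>x1' x2'. q x1' c1 * p x2' r)) * counit B x"
    by simp
  finally show ?thesis
    by (simp only: conv_inverse_pairing_swapped) (simp add: ac_simps)
qed

text \<open>In the convolution algebra of \<open>B \<otimes> H \<otimes> H\<close>, \<open>q(x,yy')\<close> is a right and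
  \<open>q(x\<^sub>1,y) q(x\<^sub>2,y')\<close> a left inverse of \<open>p(x,yy')\<close>, so the two agree.\<close>

lemma inverse_mult_right: "at_mult H y y' (q x) = sw B x (\<lambda>a b. q a y * q b y')"
proof -
  let ?V = "tensor_comult (comult B) (tensor_comult (comult H) (comult H))"
  let ?e = "\<lambda>(x,(y,y')). counit B x * (counit H y * counit H y')"
  interpret T: coalgebra ?V ?e
    using coalgebra_tensor[OF B.coalgebra coalgebra_tensor[OF H.coalgebra H.coalgebra]]
    by (simp add: case_prod_unfold)
  define P where "P = (\<lambda>(x,(y,y')). at_mult H y y' (p x))"
  define Q where "Q = (\<lambda>(x,(y,y')). at_mult H y y' (q x))"
  define Q' where "Q' = (\<lambda>(x,(y,y')). sw B x (\<lambda>a b. q a y * q b y'))"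
  have "convolution ?V P Q (x,(y,y')) = ?e (x,(y,y'))" for x y y'
  proof -
    have "convolution ?V P Q (x,(y,y')) = sw B x (\<lambda>a b. at_mult H y y' (\<lambda>e. sw H e (\<lambda>c d. p a c * q b d)))"
      by (simp add: convolution_def P_def Q_def H.at_mult_sw)
    also have "\<dots> = at_mult H y y' (\<lambda>e. sw B x (\<lambda>a b. sw H e (\<lambda>c d. p a c * q b d)))"
      by (rule sweedler_at_mult_swap)
    finally show ?thesis
      by (simp add: conv_pairing_inverse)
  qed
  then have "convolution ?V P Q = ?e"
    by (simp add: fun_eq_iff)
  moreover have "convolution ?V Q' P = ?e"
    by (simp add: fun_eq_iff convolution_def P_def Q'_def left_inverse_of_pairing_mult_right)
  ultimately have "Q' = Q"
    by (rule T.convolution_inverse_unique)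
  then show ?thesis
    by (simp add: fun_eq_iff Q_def Q'_def)
qed

lemma inverse_mult_left: "at_mult B x x' (\<lambda>a. q a y) = sw H y (\<lambda>c d. q x d * q x' c)"
proof -
  let ?V = "tensor_comult (comult H) (tensor_comult (comult B) (comult B))"
  let ?e = "\<lambda>(y,(x,x')). counit H y * (counit B x * counit B x')"
  interpret T: coalgebra ?V ?e
    using coalgebra_tensor[OF H.coalgebra coalgebra_tensor[OF B.coalgebra B.coalgebra]]
    by (simp add: case_prod_unfold)
  define P where "P = (\<lambda>(y,(x,x')). at_mult B x x' (\<lambda>a. p a y))"
  define Q where "Q = (\<lambda>(y,(x,x')). at_mult B x x' (\<lambda>a. q a y))"
  define Q' where "Q' = (\<lambda>(y,(x,x')). sw H y (\<lambda>c d. q x d * q x' c))"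
  have "convolution ?V P Q (y,(x,x')) = ?e (y,(x,x'))" for x x' y
  proof -
    have "convolution ?V P Q (y,(x,x')) = sw H y (\<lambda>c d. at_mult B x x' (\<lambda>e. sw B e (\<lambda>a b. p a c * q b d)))"
      by (simp add: convolution_def P_def Q_def B.at_mult_sw)
    also have "\<dots> = at_mult B x x' (\<lambda>e. sw H y (\<lambda>c d. sw B e (\<lambda>a b. p a c * q b d)))"
      by (rule sweedler_at_mult_swap)
    finally show ?thesis
      by (simp add: swap_B_H[symmetric] conv_pairing_inverse ac_simps)
  qed
  then have "convolution ?V P Q = ?e"
    by (simp add: fun_eq_iff)
  moreover have "convolution ?V Q' P = ?e"
    by (simp add: fun_eq_iff convolution_def P_def Q'_def left_inverse_of_pairing_mult_left)
  ultimately have "Q' = Q"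
    by (rule T.convolution_inverse_unique)
  then show ?thesis
    by (simp add: fun_eq_iff Q_def Q'_def)
qed

end

lemma conv_eq_sw: "conv A C f g x y = sw A x (\<lambda>a b. sw C y (\<lambda>c d. f a c * g b d))"
  by (simp add: conv_def sweedler_def case_prod_unfold)

lemma conv_inverse_sw:
  assumes "conv_inverse A C s t"
  shows "sw A x (\<lambda>a b. sw C y (\<lambda>c d. s a c * t b d)) = counit A x * counit C y"
    and "sw A x (\<lambda>a b. sw C y (\<lambda>c d. t a c * s b d)) = counit A x * counit C y"
  using assms by (simp_all add: conv_inverse_def conv_eq_sw)

locale cqt_structure =
  fixes A :: "('b,'k::field) bialg" and s :: "'b \<Rightarrow> 'b \<Rightarrow> 'k"
  assumes cqt_form: "cqt_form A s"
begin

lemma form_mult_left: "at_mult A h h' (\<lambda>a. s a g) = sw A g (\<lambda>c d. s h c * s h' d)"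
  using cqt_form by (simp add: cqt_form_def at_mult_def sweedler_def case_prod_unfold)

lemma form_mult_right: "at_mult A h h' (s g) = sw A g (\<lambda>a b. s b h * s a h')"
  using cqt_form by (simp add: cqt_form_def at_mult_def sweedler_def case_prod_unfold)

lemma form_one_left [simp]: "at_one A (\<lambda>a. s a h) = counit A h"
  using cqt_form by (simp add: cqt_form_def at_one_def)

lemma form_one_right [simp]: "at_one A (s h) = counit A h"
  using cqt_form by (simp add: cqt_form_def at_one_def)

lemma braiding:
  "sw A h (\<lambda>a b. sw A h' (\<lambda>c d. s a c * at_mult A b d f)) = sw A h (\<lambda>a b. sw A h' (\<lambda>c d. s b d * at_mult A c a f))"
proof -
  have "lext (\<lambda>((a,b),(c,d)). smult (s a c) (mult A b d)) (tens (comult A h) (comult A h'))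
      = lext (\<lambda>((a,b),(c,d)). smult (s b d) (mult A c a)) (tens (comult A h) (comult A h'))"
    using cqt_form by (simp add: cqt_form_def)
  then have "lfun f (lext (\<lambda>((a,b),(c,d)). smult (s a c) (mult A b d)) (tens (comult A h) (comult A h')))
      = lfun f (lext (\<lambda>((a,b),(c,d)). smult (s b d) (mult A c a)) (tens (comult A h) (comult A h')))"
    by simp
  then show ?thesis by (simp add: sweedler_def at_mult_def case_prod_unfold)
qed

end

lemma cqt_formI:
  assumes "conv_inverse A A s t"
    and "\<And>h h' g. at_mult A h h' (\<lambda>a. s a g) = sw A g (\<lambda>c d. s h c * s h' d)"
    and "\<And>h h' g. at_mult A h h' (s g) = sw A g (\<lambda>a b. s b h * s a h')"
    and "\<And>h. at_one A (\<lambda>a. s a h) = counit A h" "\<And>h. at_one A (s h) = counit A h"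
    and "\<And>h h' f. sw A h (\<lambda>a b. sw A h' (\<lambda>c d. s a c * at_mult A b d f))
                 = sw A h (\<lambda>a b. sw A h' (\<lambda>c d. s b d * at_mult A c a f))"
  shows "cqt_form A s"
  unfolding cqt_form_def conv_invertible_def
proof (intro conjI allI exI)
  show "conv_inverse A A s t" by (fact assms(1))
next
  fix h h' :: 'a
  show "lext (\<lambda>((a,b),(c,d)). smult (s a c) (mult A b d)) (tens (comult A h) (comult A h'))
      = lext (\<lambda>((a,b),(c,d)). smult (s b d) (mult A c a)) (tens (comult A h) (comult A h'))"
    using assms(6)[of h h'] by (intro vec_eq_lfunI) (simp add: sweedler_def at_mult_def case_prod_unfold)
qed (use assms(2-5) in \<open>simp_all add: at_mult_def at_one_def sweedler_def\<close>)

context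
  fixes B :: "('b,'k::field) bialg" and H :: "('c,'k) bialg" and p q :: "'b \<Rightarrow> 'c \<Rightarrow> 'k"
begin

lemma gen_double_comult: "comult (gen_double B H p q) = tensor_comult (comult B) (comult H)"
  by (simp add: gen_double_def tensor_comult_def)

lemma gen_double_counit: "counit (gen_double B H p q) = (\<lambda>(x,y). counit B x * counit H y)"
  by (simp add: gen_double_def)

lemma gen_double_counit_apply [simp]: "counit (gen_double B H p q) (x,y) = counit B x * counit H y"
  by (simp add: gen_double_counit)

lemma sw_gen_double [simp]:
  "sw (gen_double B H p q) (x,y) F = sw B x (\<lambda>a b. sw H y (\<lambda>c d. F (a,c) (b,d)))"
  by (simp add: gen_double_comult)

lemma at_one_gen_double: "at_one (gen_double B H p q) f = at_one B (\<lambda>a. at_one H (\<lambda>b. f (a,b)))"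
  by (simp add: gen_double_def at_one_def)

lemma at_mult_gen_double: "at_mult (gen_double B H p q) (x,y) (x',y') f =
   sw B x' (\<lambda>a a3. sw B a (\<lambda>a1 a2. sw H y (\<lambda>c c3. sw H c (\<lambda>c1 c2.
     p a1 c1 * q a3 c3 * at_mult B x a2 (\<lambda>e. at_mult H c2 y' (\<lambda>g. f (e,g)))))))"
  by (simp add: gen_double_def at_mult_def sweedler_def case_prod_unfold)

end

context skew_paired
begin

sublocale D: coalgebra "comult (gen_double B H p q)" "counit (gen_double B H p q)"
  unfolding gen_double_comult gen_double_counit by (rule coalgebra_tensor[OF B.coalgebra H.coalgebra])

end

section \<open>A coquasitriangular structure on the double\<close>

locale cqt_factors = skew_paired B H p q + SB: cqt_structure B sB + SH: cqt_structure H sH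
  for B :: "('b,'k::field) bialg" and H :: "('c,'k) bialg" and p q and sB sH +
  fixes tB tH
  assumes inverse_sB: "conv_inverse B B sB tB" and inverse_sH: "conv_inverse H H sH tH"
begin

abbreviation D where "D \<equiv> gen_double B H p q"

abbreviation conv_DD (infixr "\<star>" 70) where
  "f \<star> g \<equiv> convolution (tensor_comult (comult D) (comult D)) f g"

definition unit_DD :: "('b \<times> 'c) \<times> ('b \<times> 'c) \<Rightarrow> 'k" where
  "unit_DD = (\<lambda>(X,Y). counit D X * counit D Y)"

lemma unit_DD_apply [simp]: "unit_DD ((x,y),(x',y')) = counit B x * counit H y * (counit B x' * counit H y')"
  by (simp add: unit_DD_def)

sublocale DD: coalgebra "tensor_comult (comult D) (comult D)" unit_DD
  using coalgebra_tensor[OF D.coalgebra_axioms D.coalgebra_axioms] by (simp add: unit_DD_def)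

lemma conv_DD_cancel: "f \<star> g = unit_DD \<Longrightarrow> f \<star> g \<star> h = h"
  by (simp add: DD.convolution_assoc[symmetric])

lemma conv_DD_exchange: "f \<star> g = g' \<star> f' \<Longrightarrow> f \<star> g \<star> h = g' \<star> f' \<star> h"
  by (simp add: DD.convolution_assoc[symmetric])

text \<open>Bilinear forms on \<open>B \<otimes> H\<close>, \<open>B \<otimes> B\<close>, \<open>H \<otimes> H\<close> as forms on \<open>D \<otimes> D\<close>, evaluated
  at \<open>(x \<otimes> y) \<otimes> (x' \<otimes> y')\<close> on the indicated pair of tensor factors.\<close>

definition lift_x'y :: "('b \<Rightarrow> 'c \<Rightarrow> 'k) \<Rightarrow> ('b \<times> 'c) \<times> ('b \<times> 'c) \<Rightarrow> 'k" where
  "lift_x'y g = (\<lambda>((x,y),(x',y')). g x' y * (counit B x * counit H y'))"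
definition lift_xy' :: "('b \<Rightarrow> 'c \<Rightarrow> 'k) \<Rightarrow> ('b \<times> 'c) \<times> ('b \<times> 'c) \<Rightarrow> 'k" where
  "lift_xy' g = (\<lambda>((x,y),(x',y')). g x y' * (counit H y * counit B x'))"
definition lift_xx' :: "('b \<Rightarrow> 'b \<Rightarrow> 'k) \<Rightarrow> ('b \<times> 'c) \<times> ('b \<times> 'c) \<Rightarrow> 'k" where
  "lift_xx' g = (\<lambda>((x,y),(x',y')). g x x' * (counit H y * counit H y'))"
definition lift_yy' :: "('c \<Rightarrow> 'c \<Rightarrow> 'k) \<Rightarrow> ('b \<times> 'c) \<times> ('b \<times> 'c) \<Rightarrow> 'k" where
  "lift_yy' g = (\<lambda>((x,y),(x',y')). g y y' * (counit B x * counit B x'))"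

lemma conv_lift_x'y_left: "(lift_x'y g \<star> F) ((x,y),(x',y')) = sw B x' (\<lambda>a b. sw H y (\<lambda>c d. g a c * F ((x,d),(b,y'))))"
  by (simp add: convolution_def lift_x'y_def swap_B_H ac_simps)

lemma conv_lift_xy'_left: "(lift_xy' g \<star> F) ((x,y),(x',y')) = sw B x (\<lambda>a b. sw H y' (\<lambda>c d. g a c * F ((b,y),(x',d))))"
  by (simp add: convolution_def lift_xy'_def swap_B_H ac_simps)

lemma conv_lift_xx'_left: "(lift_xx' g \<star> F) ((x,y),(x',y')) = sw B x (\<lambda>a b. sw B x' (\<lambda>c d. g a c * F ((b,y),(d,y'))))"
  by (simp add: convolution_def lift_xx'_def swap_B_H ac_simps)

lemma conv_lift_yy'_left: "(lift_yy' g \<star> F) ((x,y),(x',y')) = sw H y (\<lambda>a b. sw H y' (\<lambda>c d. g a c * F ((x,b),(x',d))))"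
  by (simp add: convolution_def lift_yy'_def swap_B_H ac_simps)

lemma conv_lift_x'y_right: "(F \<star> lift_x'y g) ((x,y),(x',y')) = sw B x' (\<lambda>a b. sw H y (\<lambda>c d. F ((x,c),(a,y')) * g b d))"
  by (simp add: convolution_def lift_x'y_def swap_B_H ac_simps)

lemma conv_lift_xy'_right: "(F \<star> lift_xy' g) ((x,y),(x',y')) = sw B x (\<lambda>a b. sw H y' (\<lambda>c d. F ((a,y),(x',c)) * g b d))"
  by (simp add: convolution_def lift_xy'_def swap_B_H ac_simps)

lemma conv_lift_xx'_right: "(F \<star> lift_xx' g) ((x,y),(x',y')) = sw B x (\<lambda>a b. sw B x' (\<lambda>c d. F ((a,y),(c,y')) * g b d))"
  by (simp add: convolution_def lift_xx'_def swap_B_H ac_simps)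

lemma conv_lift_yy'_right: "(F \<star> lift_yy' g) ((x,y),(x',y')) = sw H y (\<lambda>a b. sw H y' (\<lambda>c d. F ((x,a),(x',c)) * g b d))"
  by (simp add: convolution_def lift_yy'_def swap_B_H ac_simps)

lemma lift_x'y_inverse:
  assumes "\<And>x y. sw B x (\<lambda>a b. sw H y (\<lambda>c d. g a c * h b d)) = counit B x * counit H y"
  shows "lift_x'y g \<star> lift_x'y h = unit_DD"
  unfolding fun_eq_iff split_paired_All conv_lift_x'y_left
  by (simp only: lift_x'y_def case_prod_conv mult.assoc[symmetric] sweedler_cmult_right) (simp add: assms ac_simps)

lemma lift_xy'_inverse:
  assumes "\<And>x y. sw B x (\<lambda>a b. sw H y (\<lambda>c d. g a c * h b d)) = counit B x * counit H y"
  shows "lift_xy' g \<star> lift_xy' h = unit_DD"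
  unfolding fun_eq_iff split_paired_All conv_lift_xy'_left
  by (simp only: lift_xy'_def case_prod_conv mult.assoc[symmetric] sweedler_cmult_right) (simp add: assms ac_simps)

lemma lift_xx'_inverse:
  assumes "\<And>x y. sw B x (\<lambda>a b. sw B y (\<lambda>c d. g a c * h b d)) = counit B x * counit B y"
  shows "lift_xx' g \<star> lift_xx' h = unit_DD"
  unfolding fun_eq_iff split_paired_All conv_lift_xx'_left
  by (simp only: lift_xx'_def case_prod_conv mult.assoc[symmetric] sweedler_cmult_right) (simp add: assms ac_simps)

lemma lift_yy'_inverse:
  assumes "\<And>x y. sw H x (\<lambda>a b. sw H y (\<lambda>c d. g a c * h b d)) = counit H x * counit H y"
  shows "lift_yy' g \<star> lift_yy' h = unit_DD"
  unfolding fun_eq_iff split_paired_All conv_lift_yy'_left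
  by (simp only: lift_yy'_def case_prod_conv mult.assoc[symmetric] sweedler_cmult_right) (simp add: assms ac_simps)

definition sigma_D :: "'b \<times> 'c \<Rightarrow> 'b \<times> 'c \<Rightarrow> 'k" where
  "sigma_D X Y = (lift_xy' p \<star> lift_xx' sB \<star> lift_yy' sH \<star> lift_x'y q) (X,Y)"

definition sigma_D_inv :: "'b \<times> 'c \<Rightarrow> 'b \<times> 'c \<Rightarrow> 'k" where
  "sigma_D_inv X Y = (lift_x'y p \<star> lift_yy' tH \<star> lift_xx' tB \<star> lift_xy' q) (X,Y)"

lemma conv_gen_double: "conv D D s t X Y = ((\<lambda>(X,Y). s X Y) \<star> (\<lambda>(X,Y). t X Y)) (X,Y)"
  by (simp only: convolution_def sweedler_tensor_comult case_prod_conv)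
    (simp add: conv_def gen_double_comult sweedler_def case_prod_unfold)

lemma conv_inverse_sigma_D: "conv_inverse D D sigma_D sigma_D_inv"
proof -
  have sigma: "(\<lambda>(X,Y). sigma_D X Y) = lift_xy' p \<star> lift_xx' sB \<star> lift_yy' sH \<star> lift_x'y q"
    by (simp add: sigma_D_def fun_eq_iff)
  have sigma_inv: "(\<lambda>(X,Y). sigma_D_inv X Y) = lift_x'y p \<star> lift_yy' tH \<star> lift_xx' tB \<star> lift_xy' q"
    by (simp add: sigma_D_inv_def fun_eq_iff)
  note inverse = lift_x'y_inverse lift_xy'_inverse lift_xx'_inverse lift_yy'_inverse
  note invs = conv_pairing_inverse conv_inverse_pairing conv_inverse_sw[OF inverse_sB] conv_inverse_sw[OF inverse_sH]
  have "(\<lambda>(X,Y). sigma_D X Y) \<star> (\<lambda>(X,Y). sigma_D_inv X Y) = unit_DD"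
    unfolding sigma sigma_inv
    by (simp add: DD.convolution_assoc conv_DD_cancel inverse invs)
  moreover have "(\<lambda>(X,Y). sigma_D_inv X Y) \<star> (\<lambda>(X,Y). sigma_D X Y) = unit_DD"
    unfolding sigma sigma_inv
    by (simp add: DD.convolution_assoc conv_DD_cancel inverse invs)
  ultimately show ?thesis
    unfolding conv_inverse_def conv_gen_double by (auto simp: unit_DD_def)
qed

definition tensor_mult :: "('b \<times> 'c \<Rightarrow> 'k) \<Rightarrow> ('b \<times> 'c) \<times> ('b \<times> 'c) \<Rightarrow> 'k" where
  "tensor_mult f = (\<lambda>((x,y),(x',y')). at_mult B x x' (\<lambda>e. at_mult H y y' (\<lambda>g. f (e,g))))"
definition tensor_mult_op_H :: "('b \<times> 'c \<Rightarrow> 'k) \<Rightarrow> ('b \<times> 'c) \<times> ('b \<times> 'c) \<Rightarrow> 'k" where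
  "tensor_mult_op_H f = (\<lambda>((x,y),(x',y')). at_mult B x x' (\<lambda>e. at_mult H y' y (\<lambda>g. f (e,g))))"
definition tensor_mult_op :: "('b \<times> 'c \<Rightarrow> 'k) \<Rightarrow> ('b \<times> 'c) \<times> ('b \<times> 'c) \<Rightarrow> 'k" where
  "tensor_mult_op f = (\<lambda>((x,y),(x',y')). at_mult B x' x (\<lambda>e. at_mult H y' y (\<lambda>g. f (e,g))))"

lemma at_mult_gen_double_conv:
  "(\<lambda>(X,Y). at_mult D X Y f) = lift_x'y p \<star> tensor_mult f \<star> lift_x'y q"
proof
  fix W :: "('b \<times> 'c) \<times> ('b \<times> 'c)"
  obtain x y x' y' where W: "W = ((x,y),(x',y'))" by (metis prod.exhaust)
  note normalize = swap_B_H B.coassoc H.coassoc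
  show "(\<lambda>(X,Y). at_mult D X Y f) W = (lift_x'y p \<star> tensor_mult f \<star> lift_x'y q) W"
    unfolding W case_prod_conv at_mult_gen_double
    by (simp only: conv_lift_x'y_left conv_lift_x'y_right tensor_mult_def case_prod_conv,
        (simp only: sweedler_absorb_right normalize)?,
        (simp only: sweedler_absorb_left normalize mult.assoc mult.commute mult.left_commute)?)
qed

lemma at_mult_gen_double_op_conv:
  "(\<lambda>(X,Y). at_mult D Y X f) = lift_xy' p \<star> tensor_mult_op f \<star> lift_xy' q"
proof
  fix W :: "('b \<times> 'c) \<times> ('b \<times> 'c)"
  obtain x y x' y' where W: "W = ((x,y),(x',y'))" by (metis prod.exhaust)
  note normalize = swap_B_H B.coassoc H.coassoc
  show "(\<lambda>(X,Y). at_mult D Y X f) W = (lift_xy' p \<star> tensor_mult_op f \<star> lift_xy' q) W"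
    unfolding W case_prod_conv at_mult_gen_double
    by (simp only: conv_lift_xy'_left conv_lift_xy'_right tensor_mult_op_def case_prod_conv,
        (simp only: sweedler_absorb_right normalize)?,
        (simp only: sweedler_absorb_left normalize mult.assoc mult.commute mult.left_commute)?)
qed

lemma braiding_H_tensor_mult: "lift_yy' sH \<star> tensor_mult f = tensor_mult_op_H f \<star> lift_yy' sH"
proof
  fix W :: "('b \<times> 'c) \<times> ('b \<times> 'c)"
  obtain x y x' y' where W: "W = ((x,y),(x',y'))" by (metis prod.exhaust)
  have "(lift_yy' sH \<star> tensor_mult f) W =
      sw H y (\<lambda>a b. sw H y' (\<lambda>c d. sH a c * at_mult H b d (\<lambda>g. at_mult B x x' (\<lambda>e. f (e,g)))))"
    by (simp only: W conv_lift_yy'_left tensor_mult_def case_prod_conv at_mult_swap[of B _ _ H])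
  also have "\<dots> = sw H y (\<lambda>a b. sw H y' (\<lambda>c d. sH b d * at_mult H c a (\<lambda>g. at_mult B x x' (\<lambda>e. f (e,g)))))"
    by (rule SH.braiding)
  also have "\<dots> = (tensor_mult_op_H f \<star> lift_yy' sH) W"
    by (simp only: W conv_lift_yy'_right tensor_mult_op_H_def case_prod_conv at_mult_swap[of B _ _ H] mult.commute)
  finally show "(lift_yy' sH \<star> tensor_mult f) W = (tensor_mult_op_H f \<star> lift_yy' sH) W" .
qed

lemma braiding_B_tensor_mult_op_H: "lift_xx' sB \<star> tensor_mult_op_H f = tensor_mult_op f \<star> lift_xx' sB"
proof
  fix W :: "('b \<times> 'c) \<times> ('b \<times> 'c)"
  obtain x y x' y' where W: "W = ((x,y),(x',y'))" by (metis prod.exhaust)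
  have "(lift_xx' sB \<star> tensor_mult_op_H f) W =
      sw B x (\<lambda>a b. sw B x' (\<lambda>c d. sB a c * at_mult B b d (\<lambda>e. at_mult H y' y (\<lambda>g. f (e,g)))))"
    by (simp only: W conv_lift_xx'_left tensor_mult_op_H_def case_prod_conv)
  also have "\<dots> = sw B x (\<lambda>a b. sw B x' (\<lambda>c d. sB b d * at_mult B c a (\<lambda>e. at_mult H y' y (\<lambda>g. f (e,g)))))"
    by (rule SB.braiding)
  also have "\<dots> = (tensor_mult_op f \<star> lift_xx' sB) W"
    by (simp only: W conv_lift_xx'_right tensor_mult_op_def case_prod_conv mult.commute)
  finally show "(lift_xx' sB \<star> tensor_mult_op_H f) W = (tensor_mult_op f \<star> lift_xx' sB) W" .
qed

lemma braiding_gen_double: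
  "(\<lambda>(X,Y). sigma_D X Y) \<star> (\<lambda>(X,Y). at_mult D X Y f) = (\<lambda>(X,Y). at_mult D Y X f) \<star> (\<lambda>(X,Y). sigma_D X Y)"
proof -
  have sigma: "(\<lambda>(X,Y). sigma_D X Y) = lift_xy' p \<star> lift_xx' sB \<star> lift_yy' sH \<star> lift_x'y q"
    by (simp add: sigma_D_def fun_eq_iff)
  have "lift_x'y q \<star> lift_x'y p = unit_DD" "lift_xy' q \<star> lift_xy' p = unit_DD"
    by (intro lift_x'y_inverse lift_xy'_inverse conv_inverse_pairing)+
  then show ?thesis
    unfolding sigma at_mult_gen_double_conv at_mult_gen_double_op_conv
    by (simp add: DD.convolution_assoc conv_DD_cancel conv_DD_exchange[OF braiding_H_tensor_mult]
        conv_DD_exchange[OF braiding_B_tensor_mult_op_H])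
qed

text \<open>The values \<open>\<sigma>\<^sub>D(x \<otimes> 1, Z)\<close>, \<open>\<sigma>\<^sub>D(1 \<otimes> y, Z)\<close>, \<open>\<sigma>\<^sub>D(Z, x \<otimes> 1)\<close> and \<open>\<sigma>\<^sub>D(Z, 1 \<otimes> y)\<close>;
  the unit is not a basis vector, so they are given by their explicit formulas.\<close>

definition sigma_fst_B :: "'b \<times> 'c \<Rightarrow> 'b \<Rightarrow> 'k" where
  "sigma_fst_B Z = (\<lambda>x. sw B x (\<lambda>x1 x2. sB x2 (fst Z) * p x1 (snd Z)))"
definition sigma_fst_H :: "'b \<times> 'c \<Rightarrow> 'c \<Rightarrow> 'k" where
  "sigma_fst_H Z = (\<lambda>y. sw H y (\<lambda>y1 y2. q (fst Z) y2 * sH y1 (snd Z)))"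
definition sigma_snd_B :: "'b \<times> 'c \<Rightarrow> 'b \<Rightarrow> 'k" where
  "sigma_snd_B Z = (\<lambda>x. sw B x (\<lambda>x1 x2. sB (fst Z) x1 * q x2 (snd Z)))"
definition sigma_snd_H :: "'b \<times> 'c \<Rightarrow> 'c \<Rightarrow> 'k" where
  "sigma_snd_H Z = (\<lambda>y. sw H y (\<lambda>y1 y2. p (fst Z) y1 * sH (snd Z) y2))"

lemma sigma_D_fst_factor: "sigma_D (x,y) Z = sw D Z (\<lambda>Z1 Z2. sigma_fst_B Z1 x * sigma_fst_H Z2 y)"
proof -
  obtain x' y' where Z: "Z = (x',y')" by (cases Z)
  note normalize = swap_B_H sweedler_swap[of "comult B" x' "comult B" x]
  have "sigma_D (x,y) Z = sw B x (\<lambda>a b. sw H y' (\<lambda>c d. p a c * sw B b (\<lambda>a2 b2. sw B x' (\<lambda>c2 d2.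
      sw H y (\<lambda>a3 b3. sw H d (\<lambda>c3 d3. sB a2 c2 * sH a3 c3 * q d2 b3 * counit B b2 * counit H d3))))))"
    unfolding Z sigma_D_def
    by (simp only: conv_lift_xy'_left conv_lift_xx'_left conv_lift_yy'_left lift_x'y_def case_prod_conv,
        (simp only: sweedler_absorb_right normalize)?,
        (simp only: sweedler_absorb_left normalize mult.assoc mult.commute mult.left_commute)?)
  also have "\<dots> = sw B x (\<lambda>a b. sw H y' (\<lambda>c d. p a c * sw B x' (\<lambda>c2 d2. sw H y (\<lambda>a3 b3. sB b c2 * sH a3 d * q d2 b3))))"
    by simp
  also have "\<dots> = sw D Z (\<lambda>Z1 Z2. sigma_fst_B Z1 x * sigma_fst_H Z2 y)"
    unfolding Z sigma_fst_B_def sigma_fst_H_def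
    by (simp only: sw_gen_double fst_conv snd_conv, (simp only: sweedler_absorb_right normalize)?,
        (simp only: sweedler_absorb_left normalize mult.assoc mult.commute mult.left_commute)?)
  finally show ?thesis .
qed

lemma sigma_D_snd_factor: "sigma_D Z (x,y) = sw D Z (\<lambda>Z1 Z2. sigma_snd_B Z2 x * sigma_snd_H Z1 y)"
proof -
  obtain u v where Z: "Z = (u,v)" by (cases Z)
  note normalize = swap_B_H sweedler_swap[of "comult H" _ "comult H" v] sweedler_swap[of "comult B" _ "comult B" u]
  show ?thesis
    unfolding Z sigma_D_fst_factor sigma_fst_B_def sigma_fst_H_def sigma_snd_B_def sigma_snd_H_def
    by (simp only: sw_gen_double fst_conv snd_conv, (simp only: sweedler_absorb_right normalize)?,
        (simp only: sweedler_absorb_left normalize mult.assoc mult.commute mult.left_commute)?)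
qed

lemma sigma_fst_B_mult: "at_mult B x x' (sigma_fst_B Z) = sw D Z (\<lambda>Z1 Z2. sigma_fst_B Z1 x * sigma_fst_B Z2 x')"
proof -
  obtain u v where Z: "Z = (u,v)" by (cases Z)
  note normalize = swap_B_H sweedler_swap[of "comult B" x "comult B" u] sweedler_swap[of "comult B" x' "comult B" u]
     sweedler_swap[of "comult B" x' "comult B" x]
  have "at_mult B x x' (sigma_fst_B Z) = sw B x (\<lambda>x1 x2. sw B x' (\<lambda>x1' x2'.
      sw B u (\<lambda>c d. sB x2 c * sB x2' d) * sw H v (\<lambda>c d. p x1 c * p x1' d)))"
    by (simp add: Z sigma_fst_B_def B.at_mult_sw SB.form_mult_left pairing_mult_left)
  also have "\<dots> = sw D Z (\<lambda>Z1 Z2. sigma_fst_B Z1 x * sigma_fst_B Z2 x')"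
    unfolding Z sigma_fst_B_def
    by (simp only: sw_gen_double fst_conv snd_conv, (simp only: sweedler_absorb_right normalize)?,
        (simp only: sweedler_absorb_left normalize mult.assoc mult.commute mult.left_commute)?)
  finally show ?thesis .
qed

lemma sigma_fst_H_mult: "at_mult H y y' (sigma_fst_H Z) = sw D Z (\<lambda>Z1 Z2. sigma_fst_H Z1 y * sigma_fst_H Z2 y')"
proof -
  obtain u v where Z: "Z = (u,v)" by (cases Z)
  note normalize = swap_B_H sweedler_swap[of "comult H" y "comult H" v] sweedler_swap[of "comult H" y' "comult H" v]
     sweedler_swap[of "comult H" y' "comult H" y]
  show ?thesis
    unfolding Z sigma_fst_H_def
    by (simp add: H.at_mult_sw inverse_mult_right SH.form_mult_left,
        (simp only: sweedler_absorb_right normalize)?,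
        (simp only: sweedler_absorb_left normalize mult.assoc mult.commute mult.left_commute)?)
qed

lemma sigma_snd_B_mult: "at_mult B x x' (sigma_snd_B Z) = sw D Z (\<lambda>Z1 Z2. sigma_snd_B Z2 x * sigma_snd_B Z1 x')"
proof -
  obtain u v where Z: "Z = (u,v)" by (cases Z)
  note normalize = swap_B_H sweedler_swap[of "comult B" x "comult B" u] sweedler_swap[of "comult B" x' "comult B" u]
     sweedler_swap[of "comult B" x' "comult B" x]
  show ?thesis
    unfolding Z sigma_snd_B_def
    by (simp add: B.at_mult_sw inverse_mult_left SB.form_mult_right,
        (simp only: sweedler_absorb_right normalize)?,
        (simp only: sweedler_absorb_left normalize mult.assoc mult.commute mult.left_commute)?)
qed

lemma sigma_snd_H_mult: "at_mult H y y' (sigma_snd_H Z) = sw D Z (\<lambda>Z1 Z2. sigma_snd_H Z2 y * sigma_snd_H Z1 y')"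
proof -
  obtain u v where Z: "Z = (u,v)" by (cases Z)
  note normalize = swap_B_H sweedler_swap[of "comult H" y "comult H" v] sweedler_swap[of "comult H" y' "comult H" v]
     sweedler_swap[of "comult H" y' "comult H" y]
  show ?thesis
    unfolding Z sigma_snd_H_def
    by (simp add: H.at_mult_sw pairing_mult_right SH.form_mult_right,
        (simp only: sweedler_absorb_right normalize)?,
        (simp only: sweedler_absorb_left normalize mult.assoc mult.commute mult.left_commute)?)
qed

text \<open>The braidings of \<open>B\<close> and \<open>H\<close> seen through a factor \<open>p\<close> or \<open>q\<close>; in product form
  the first identity reads \<open>p(X, v\<^sub>1Y\<^sub>1) \<sigma>\<^sub>H(Y\<^sub>2,v\<^sub>2) = \<sigma>\<^sub>H(Y\<^sub>1,v\<^sub>1) p(X, Y\<^sub>2v\<^sub>2)\<close>.\<close>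

lemma pairing_braiding_H:
  "sw B X (\<lambda>X1 X2. sw H Y (\<lambda>Y1 Y2. sw H v (\<lambda>v1 v2. p X1 Y1 * p X2 v1 * sH Y2 v2))) =
   sw B X (\<lambda>X1 X2. sw H Y (\<lambda>Y1 Y2. sw H v (\<lambda>v1 v2. sH Y1 v1 * p X1 v2 * p X2 Y2)))"
proof -
  note normalize = swap_B_H fst_conv snd_conv sweedler_swap[of "comult H" Y "comult H" v]
  have "sw B X (\<lambda>X1 X2. sw H Y (\<lambda>Y1 Y2. sw H v (\<lambda>v1 v2. p X1 Y1 * p X2 v1 * sH Y2 v2))) =
        sw H Y (\<lambda>Y1 Y2. sw H v (\<lambda>v1 v2. sH Y2 v2 * at_mult H v1 Y1 (p X)))"
    by (simp only: pairing_mult_right,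
        (simp only: sweedler_absorb_right normalize)?,
        (simp only: sweedler_absorb_left normalize mult.assoc mult.commute mult.left_commute)?)
  also have "\<dots> = sw H Y (\<lambda>Y1 Y2. sw H v (\<lambda>v1 v2. sH Y1 v1 * at_mult H Y2 v2 (p X)))"
    by (rule SH.braiding[symmetric])
  also have "\<dots> = sw B X (\<lambda>X1 X2. sw H Y (\<lambda>Y1 Y2. sw H v (\<lambda>v1 v2. sH Y1 v1 * p X1 v2 * p X2 Y2)))"
    by (simp only: pairing_mult_right,
        (simp only: sweedler_absorb_right normalize)?,
        (simp only: sweedler_absorb_left normalize mult.assoc mult.commute mult.left_commute)?)
  finally show ?thesis .
qed

lemma inverse_braiding_B:
  "sw B X (\<lambda>X1 X2. sw H Y (\<lambda>Y1 Y2. sw B u (\<lambda>u1 u2. sB X1 u1 * q u2 Y1 * q X2 Y2))) =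
   sw B X (\<lambda>X1 X2. sw H Y (\<lambda>Y1 Y2. sw B u (\<lambda>u1 u2. q X1 Y1 * q u1 Y2 * sB X2 u2)))"
proof -
  note normalize = swap_B_H fst_conv snd_conv sweedler_swap[of "comult B" X "comult B" u]
  have "sw B X (\<lambda>X1 X2. sw H Y (\<lambda>Y1 Y2. sw B u (\<lambda>u1 u2. sB X1 u1 * q u2 Y1 * q X2 Y2))) =
        sw B X (\<lambda>X1 X2. sw B u (\<lambda>u1 u2. sB X1 u1 * at_mult B X2 u2 (\<lambda>a. q a Y)))"
    by (simp only: inverse_mult_left,
        (simp only: sweedler_absorb_right normalize)?,
        (simp only: sweedler_absorb_left normalize mult.assoc mult.commute mult.left_commute)?)
  also have "\<dots> = sw B X (\<lambda>X1 X2. sw B u (\<lambda>u1 u2. sB X2 u2 * at_mult B u1 X1 (\<lambda>a. q a Y)))"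
    by (rule SB.braiding)
  also have "\<dots> = sw B X (\<lambda>X1 X2. sw H Y (\<lambda>Y1 Y2. sw B u (\<lambda>u1 u2. q X1 Y1 * q u1 Y2 * sB X2 u2)))"
    by (simp only: inverse_mult_left,
        (simp only: sweedler_absorb_right normalize)?,
        (simp only: sweedler_absorb_left normalize mult.assoc mult.commute mult.left_commute)?)
  finally show ?thesis .
qed

text \<open>\<open>\<sigma>\<^sub>D((1 \<otimes> y)(x' \<otimes> 1), Z) = \<sigma>\<^sub>D(1 \<otimes> y, Z\<^sub>1) \<sigma>\<^sub>D(x' \<otimes> 1, Z\<^sub>2)\<close>, with the product
  \<open>(1 \<otimes> y)(x' \<otimes> 1) = p(x'\<^sub>1,y\<^sub>1) q(x'\<^sub>3,y\<^sub>3) x'\<^sub>2 \<otimes> y\<^sub>2\<close> written out; similarly for the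
  second argument below.\<close>

lemma sigma_fst_exchange: "sw B x' (\<lambda>a a3. sw B a (\<lambda>a1 a2. sw H y (\<lambda>c c3. sw H c (\<lambda>c1 c2.
      p a1 c1 * q a3 c3 * sw D Z (\<lambda>Z1 Z2. sigma_fst_B Z1 a2 * sigma_fst_H Z2 c2)))))
   = sw D Z (\<lambda>Z1 Z2. sigma_fst_H Z1 y * sigma_fst_B Z2 x')"
proof -
  obtain u v where Z: "Z = (u,v)" by (cases Z)
  note normalize = swap_B_H fst_conv snd_conv
    sweedler_swap[of "comult H" _ "comult H" v] sweedler_swap[of "comult B" _ "comult B" u]
  note coassoc_split = B.coassoc4_split H.coassoc4_split
  note coassoc_nest = B.coassoc4_nest H.coassoc4_nest
  have "sw B x' (\<lambda>a a3. sw B a (\<lambda>a1 a2. sw H y (\<lambda>c c3. sw H c (\<lambda>c1 c2.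
      p a1 c1 * q a3 c3 * sw D Z (\<lambda>Z1 Z2. sigma_fst_B Z1 a2 * sigma_fst_H Z2 c2)))))
    = sw B x' (\<lambda>X X'. sw H y (\<lambda>Y Y'.
        sw B X (\<lambda>X1 X2. sw H Y (\<lambda>Y1 Y2. sw H v (\<lambda>v1 v2. p X1 Y1 * p X2 v1 * sH Y2 v2))) *
        sw B X' (\<lambda>X1 X2. sw H Y' (\<lambda>Y1 Y2. sw B u (\<lambda>u1 u2. sB X1 u1 * q u2 Y1 * q X2 Y2)))))"
    unfolding Z sw_gen_double sigma_fst_B_def sigma_fst_H_def
    by ((simp only: sweedler_absorb_right normalize)?,
        (simp only: sweedler_absorb_left normalize coassoc_split mult.assoc mult.commute mult.left_commute)?)
  also have "\<dots> = sw B x' (\<lambda>X X'. sw H y (\<lambda>Y Y'.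
        sw B X (\<lambda>X1 X2. sw H Y (\<lambda>Y1 Y2. sw H v (\<lambda>v1 v2. sH Y1 v1 * p X1 v2 * p X2 Y2))) *
        sw B X' (\<lambda>X1 X2. sw H Y' (\<lambda>Y1 Y2. sw B u (\<lambda>u1 u2. q X1 Y1 * q u1 Y2 * sB X2 u2)))))"
    by (simp only: pairing_braiding_H inverse_braiding_B)
  also have "\<dots> = sw B x' (\<lambda>X1 RB. sw B RB (\<lambda>MB X'2. sw H y (\<lambda>Y1 RH. sw H RH (\<lambda>MH Y'2.
        sw B u (\<lambda>u1 u2. sw H v (\<lambda>v1 v2. sH Y1 v1 * p X1 v2 * q u1 Y'2 * sB X'2 u2 *
          sw B MB (\<lambda>X2 X'1. sw H MH (\<lambda>Y2 Y'1. p X2 Y2 * q X'1 Y'1))))))))"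
    by ((simp only: sweedler_absorb_right normalize)?,
        (simp only: sweedler_absorb_left normalize coassoc_nest mult.assoc mult.commute mult.left_commute)?)
  also have "\<dots> = sw B x' (\<lambda>X1 RB. sw B RB (\<lambda>MB X'2. sw H y (\<lambda>Y1 RH. sw H RH (\<lambda>MH Y'2.
        sw B u (\<lambda>u1 u2. sw H v (\<lambda>v1 v2. sH Y1 v1 * p X1 v2 * q u1 Y'2 * sB X'2 u2 *
          (counit B MB * counit H MH)))))))"
    by (simp only: conv_pairing_inverse)
  also have "\<dots> = sw B x' (\<lambda>X1 RB. sw B RB (\<lambda>MB X'2. counit B MB * sw H y (\<lambda>Y1 RH. sw H RH (\<lambda>MH Y'2. counit H MH *
        sw B u (\<lambda>u1 u2. sw H v (\<lambda>v1 v2. sH Y1 v1 * p X1 v2 * q u1 Y'2 * sB X'2 u2))))))"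
    by ((simp only: sweedler_absorb_right normalize)?,
        (simp only: sweedler_absorb_left normalize mult.assoc mult.commute mult.left_commute)?)
  also have "\<dots> = sw B x' (\<lambda>X1 X'2. sw H y (\<lambda>Y1 Y'2.
        sw B u (\<lambda>u1 u2. sw H v (\<lambda>v1 v2. sH Y1 v1 * p X1 v2 * q u1 Y'2 * sB X'2 u2))))"
    by (simp only: B.counit_left H.counit_left)
  also have "\<dots> = sw D Z (\<lambda>Z1 Z2. sigma_fst_H Z1 y * sigma_fst_B Z2 x')"
    unfolding Z sw_gen_double sigma_fst_B_def sigma_fst_H_def
    by ((simp only: sweedler_absorb_right normalize)?,
        (simp only: sweedler_absorb_left normalize mult.assoc mult.commute mult.left_commute)?)
  finally show ?thesis .
qed

lemma pairing_braiding_B: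
  "sw B X (\<lambda>X1 X2. sw H Y (\<lambda>Y1 Y2. sw B u (\<lambda>u1 u2. p X1 Y1 * sB u2 X2 * p u1 Y2))) =
   sw B X (\<lambda>X1 X2. sw H Y (\<lambda>Y1 Y2. sw B u (\<lambda>u1 u2. sB u1 X1 * p u2 Y1 * p X2 Y2)))"
proof -
  note normalize = swap_B_H fst_conv snd_conv sweedler_swap[of "comult B" X "comult B" u]
  have "sw B X (\<lambda>X1 X2. sw H Y (\<lambda>Y1 Y2. sw B u (\<lambda>u1 u2. p X1 Y1 * sB u2 X2 * p u1 Y2))) =
        sw B u (\<lambda>u1 u2. sw B X (\<lambda>X1 X2. sB u2 X2 * at_mult B X1 u1 (\<lambda>a. p a Y)))"
    by (simp only: pairing_mult_left,
        (simp only: sweedler_absorb_right normalize)?,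
        (simp only: sweedler_absorb_left normalize mult.assoc mult.commute mult.left_commute)?)
  also have "\<dots> = sw B u (\<lambda>u1 u2. sw B X (\<lambda>X1 X2. sB u1 X1 * at_mult B u2 X2 (\<lambda>a. p a Y)))"
    by (rule SB.braiding[symmetric])
  also have "\<dots> = sw B X (\<lambda>X1 X2. sw H Y (\<lambda>Y1 Y2. sw B u (\<lambda>u1 u2. sB u1 X1 * p u2 Y1 * p X2 Y2)))"
    by (simp only: pairing_mult_left,
        (simp only: sweedler_absorb_right normalize)?,
        (simp only: sweedler_absorb_left normalize mult.assoc mult.commute mult.left_commute)?)
  finally show ?thesis .
qed

lemma inverse_braiding_H:
  "sw B X (\<lambda>X1 X2. sw H Y (\<lambda>Y1 Y2. sw H v (\<lambda>v1 v2. q X1 v2 * sH v1 Y1 * q X2 Y2))) =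
   sw B X (\<lambda>X1 X2. sw H Y (\<lambda>Y1 Y2. sw H v (\<lambda>v1 v2. q X1 Y1 * q X2 v1 * sH v2 Y2)))"
proof -
  note normalize = swap_B_H fst_conv snd_conv sweedler_swap[of "comult H" Y "comult H" v]
  have "sw B X (\<lambda>X1 X2. sw H Y (\<lambda>Y1 Y2. sw H v (\<lambda>v1 v2. q X1 v2 * sH v1 Y1 * q X2 Y2))) =
        sw H v (\<lambda>v1 v2. sw H Y (\<lambda>Y1 Y2. sH v1 Y1 * at_mult H v2 Y2 (q X)))"
    by (simp only: inverse_mult_right,
        (simp only: sweedler_absorb_right normalize)?,
        (simp only: sweedler_absorb_left normalize mult.assoc mult.commute mult.left_commute)?)
  also have "\<dots> = sw H v (\<lambda>v1 v2. sw H Y (\<lambda>Y1 Y2. sH v2 Y2 * at_mult H Y1 v1 (q X)))"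
    by (rule SH.braiding)
  also have "\<dots> = sw B X (\<lambda>X1 X2. sw H Y (\<lambda>Y1 Y2. sw H v (\<lambda>v1 v2. q X1 Y1 * q X2 v1 * sH v2 Y2)))"
    by (simp only: inverse_mult_right,
        (simp only: sweedler_absorb_right normalize)?,
        (simp only: sweedler_absorb_left normalize mult.assoc mult.commute mult.left_commute)?)
  finally show ?thesis .
qed

lemma sigma_snd_exchange: "sw B x' (\<lambda>a a3. sw B a (\<lambda>a1 a2. sw H y (\<lambda>c c3. sw H c (\<lambda>c1 c2.
      p a1 c1 * q a3 c3 * sw D Z (\<lambda>Z1 Z2. sigma_snd_B Z2 a2 * sigma_snd_H Z1 c2)))))
   = sw D Z (\<lambda>Z1 Z2. sigma_snd_H Z2 y * sigma_snd_B Z1 x')"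
proof -
  obtain u v where Z: "Z = (u,v)" by (cases Z)
  note normalize = swap_B_H fst_conv snd_conv
    sweedler_swap[of "comult H" _ "comult H" v] sweedler_swap[of "comult B" _ "comult B" u]
  note coassoc_split = B.coassoc4_split H.coassoc4_split
  note coassoc_nest = B.coassoc4_nest H.coassoc4_nest
  have "sw B x' (\<lambda>a a3. sw B a (\<lambda>a1 a2. sw H y (\<lambda>c c3. sw H c (\<lambda>c1 c2.
      p a1 c1 * q a3 c3 * sw D Z (\<lambda>Z1 Z2. sigma_snd_B Z2 a2 * sigma_snd_H Z1 c2)))))
    = sw B x' (\<lambda>X X'. sw H y (\<lambda>Y Y'.
        sw B X (\<lambda>X1 X2. sw H Y (\<lambda>Y1 Y2. sw B u (\<lambda>u1 u2. p X1 Y1 * sB u2 X2 * p u1 Y2))) *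
        sw B X' (\<lambda>X1 X2. sw H Y' (\<lambda>Y1 Y2. sw H v (\<lambda>v1 v2. q X1 v2 * sH v1 Y1 * q X2 Y2)))))"
    unfolding Z sw_gen_double sigma_snd_B_def sigma_snd_H_def
    by ((simp only: sweedler_absorb_right normalize)?,
        (simp only: sweedler_absorb_left normalize coassoc_split mult.assoc mult.commute mult.left_commute)?)
  also have "\<dots> = sw B x' (\<lambda>X X'. sw H y (\<lambda>Y Y'.
        sw B X (\<lambda>X1 X2. sw H Y (\<lambda>Y1 Y2. sw B u (\<lambda>u1 u2. sB u1 X1 * p u2 Y1 * p X2 Y2))) *
        sw B X' (\<lambda>X1 X2. sw H Y' (\<lambda>Y1 Y2. sw H v (\<lambda>v1 v2. q X1 Y1 * q X2 v1 * sH v2 Y2)))))"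
    by (simp only: pairing_braiding_B inverse_braiding_H)
  also have "\<dots> = sw B x' (\<lambda>X1 RB. sw B RB (\<lambda>MB X'2. sw H y (\<lambda>Y1 RH. sw H RH (\<lambda>MH Y'2.
        sw B u (\<lambda>u1 u2. sw H v (\<lambda>v1 v2. sB u1 X1 * p u2 Y1 * q X'2 v1 * sH v2 Y'2 *
          sw B MB (\<lambda>X2 X'1. sw H MH (\<lambda>Y2 Y'1. p X2 Y2 * q X'1 Y'1))))))))"
    by ((simp only: sweedler_absorb_right normalize)?,
        (simp only: sweedler_absorb_left normalize coassoc_nest mult.assoc mult.commute mult.left_commute)?)
  also have "\<dots> = sw B x' (\<lambda>X1 RB. sw B RB (\<lambda>MB X'2. sw H y (\<lambda>Y1 RH. sw H RH (\<lambda>MH Y'2.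
        sw B u (\<lambda>u1 u2. sw H v (\<lambda>v1 v2. sB u1 X1 * p u2 Y1 * q X'2 v1 * sH v2 Y'2 *
          (counit B MB * counit H MH)))))))"
    by (simp only: conv_pairing_inverse)
  also have "\<dots> = sw B x' (\<lambda>X1 RB. sw B RB (\<lambda>MB X'2. counit B MB * sw H y (\<lambda>Y1 RH. sw H RH (\<lambda>MH Y'2. counit H MH *
        sw B u (\<lambda>u1 u2. sw H v (\<lambda>v1 v2. sB u1 X1 * p u2 Y1 * q X'2 v1 * sH v2 Y'2))))))"
    by ((simp only: sweedler_absorb_right normalize)?,
        (simp only: sweedler_absorb_left normalize mult.assoc mult.commute mult.left_commute)?)
  also have "\<dots> = sw B x' (\<lambda>X1 X'2. sw H y (\<lambda>Y1 Y'2.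
        sw B u (\<lambda>u1 u2. sw H v (\<lambda>v1 v2. sB u1 X1 * p u2 Y1 * q X'2 v1 * sH v2 Y'2))))"
    by (simp only: B.counit_left H.counit_left)
  also have "\<dots> = sw D Z (\<lambda>Z1 Z2. sigma_snd_H Z2 y * sigma_snd_B Z1 x')"
    unfolding Z sw_gen_double sigma_snd_B_def sigma_snd_H_def
    by ((simp only: sweedler_absorb_right normalize)?,
        (simp only: sweedler_absorb_left normalize mult.assoc mult.commute mult.left_commute)?)
  finally show ?thesis .
qed

lemma sigma_D_mult_left: "at_mult D X Y (\<lambda>W. sigma_D W Z) = sw D Z (\<lambda>Z1 Z2. sigma_D X Z1 * sigma_D Y Z2)"
proof -
  obtain x y x' y' where X: "X = (x,y)" and Y: "Y = (x',y')" by (cases X, cases Y)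
  note normalize = sweedler_swap[of "comult B" _ "comult D"] sweedler_swap[of "comult H" _ "comult D"] swap_B_H
  have sigma: "(\<lambda>W. sigma_D W Z) = (\<lambda>(e,g). sw D Z (\<lambda>Z1 Z2. sigma_fst_B Z1 e * sigma_fst_H Z2 g))"
    by (auto simp: sigma_D_fst_factor)
  have "at_mult D X Y (\<lambda>W. sigma_D W Z) = sw D Z (\<lambda>Za R. sw D R (\<lambda>M Zd. sigma_fst_B Za x * sigma_fst_H Zd y' *
      sw B x' (\<lambda>a a3. sw B a (\<lambda>a1 a2. sw H y (\<lambda>c c3. sw H c (\<lambda>c1 c2.
      p a1 c1 * q a3 c3 * sw D M (\<lambda>Z1 Z2. sigma_fst_B Z1 a2 * sigma_fst_H Z2 c2)))))))"
    unfolding sigma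
    by (simp add: X Y at_mult_gen_double sweedler_at_mult_swap[symmetric] sigma_fst_B_mult sigma_fst_H_mult,
       (simp only: sweedler_absorb_right normalize)?,
       (simp only: sweedler_absorb_left normalize D.coassoc4_nest mult.assoc mult.commute mult.left_commute)?)
  also have "\<dots> = sw D Z (\<lambda>Za R. sw D R (\<lambda>M Zd. sigma_fst_B Za x * sigma_fst_H Zd y' *
      sw D M (\<lambda>Z1 Z2. sigma_fst_H Z1 y * sigma_fst_B Z2 x')))"
    by (simp only: sigma_fst_exchange)
  also have "\<dots> = sw D Z (\<lambda>Z1 Z2. sigma_D X Z1 * sigma_D Y Z2)"
    unfolding X Y sigma_D_fst_factor
    by ((simp only: sweedler_absorb_right normalize)?,
        (simp only: sweedler_absorb_left normalize D.coassoc4_nest mult.assoc mult.commute mult.left_commute)?)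
  finally show ?thesis .
qed

lemma sigma_D_mult_right: "at_mult D X Y (sigma_D Z) = sw D Z (\<lambda>Z1 Z2. sigma_D Z2 X * sigma_D Z1 Y)"
proof -
  obtain x y x' y' where X: "X = (x,y)" and Y: "Y = (x',y')" by (cases X, cases Y)
  note normalize = sweedler_swap[of "comult B" _ "comult D"] sweedler_swap[of "comult H" _ "comult D"] swap_B_H
  have sigma: "sigma_D Z = (\<lambda>(e,g). sw D Z (\<lambda>Z1 Z2. sigma_snd_B Z2 e * sigma_snd_H Z1 g))"
    by (auto simp: sigma_D_snd_factor)
  have "at_mult D X Y (sigma_D Z) = sw D Z (\<lambda>Zc R. sw D R (\<lambda>M Zb. sigma_snd_B Zb x * sigma_snd_H Zc y' *
      sw B x' (\<lambda>a a3. sw B a (\<lambda>a1 a2. sw H y (\<lambda>c c3. sw H c (\<lambda>c1 c2.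
      p a1 c1 * q a3 c3 * sw D M (\<lambda>Z1 Z2. sigma_snd_B Z2 a2 * sigma_snd_H Z1 c2)))))))"
    unfolding sigma
    by (simp add: X Y at_mult_gen_double sweedler_at_mult_swap[symmetric] sigma_snd_B_mult sigma_snd_H_mult,
       (simp only: sweedler_absorb_right normalize)?,
       (simp only: sweedler_absorb_left normalize D.coassoc4_nest sweedler_swap_factors
          mult.assoc mult.commute mult.left_commute)?)
  also have "\<dots> = sw D Z (\<lambda>Zc R. sw D R (\<lambda>M Zb. sigma_snd_B Zb x * sigma_snd_H Zc y' *
      sw D M (\<lambda>Z1 Z2. sigma_snd_H Z2 y * sigma_snd_B Z1 x')))"
    by (simp only: sigma_snd_exchange)
  also have "\<dots> = sw D Z (\<lambda>Z1 Z2. sigma_D Z2 X * sigma_D Z1 Y)"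
    unfolding X Y sigma_D_snd_factor
    by ((simp only: sweedler_absorb_right normalize)?,
        (simp only: sweedler_absorb_left normalize D.coassoc4_nest sweedler_swap_factors
          mult.assoc mult.commute mult.left_commute)?)
  finally show ?thesis .
qed

lemma at_one_sigma_fst_B [simp]: "at_one B (sigma_fst_B Z) = counit D Z"
  by (cases Z) (simp add: sigma_fst_B_def B.at_one_sw mult.commute)

lemma at_one_sigma_fst_H [simp]: "at_one H (sigma_fst_H Z) = counit D Z"
  by (cases Z) (simp add: sigma_fst_H_def H.at_one_sw)

lemma at_one_sigma_snd_B [simp]: "at_one B (sigma_snd_B Z) = counit D Z"
  by (cases Z) (simp add: sigma_snd_B_def B.at_one_sw)

lemma at_one_sigma_snd_H [simp]: "at_one H (sigma_snd_H Z) = counit D Z"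
  by (cases Z) (simp add: sigma_snd_H_def H.at_one_sw)

lemma sigma_D_one_left: "at_one D (\<lambda>W. sigma_D W Z) = counit D Z"
proof -
  have "at_one D (\<lambda>W. sigma_D W Z) = sw D Z (\<lambda>Z1 Z2. at_one B (sigma_fst_B Z1) * at_one H (sigma_fst_H Z2))"
    by (simp add: at_one_gen_double sigma_D_fst_factor sweedler_at_one_swap[symmetric])
  then show ?thesis by simp
qed

lemma sigma_D_one_right: "at_one D (sigma_D Z) = counit D Z"
proof -
  have "at_one D (sigma_D Z) = sw D Z (\<lambda>Z1 Z2. at_one H (sigma_snd_H Z1) * at_one B (sigma_snd_B Z2))"
    by (simp add: at_one_gen_double sigma_D_snd_factor sweedler_at_one_swap[symmetric] mult.commute)
  then show ?thesis by simp
qed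

theorem cqt_form_gen_double: "cqt_form D sigma_D"
proof (rule cqt_formI[OF conv_inverse_sigma_D sigma_D_mult_left sigma_D_mult_right
      sigma_D_one_left sigma_D_one_right])
  fix h h' f
  show "sw D h (\<lambda>a b. sw D h' (\<lambda>c d. sigma_D a c * at_mult D b d f))
      = sw D h (\<lambda>a b. sw D h' (\<lambda>c d. sigma_D b d * at_mult D c a f))"
    using fun_cong[OF braiding_gen_double[of f], of "(h,h')"] by (simp add: convolution_def mult.commute)
qed

end

section \<open>Restriction to the factors\<close>

locale cqt_double = skew_paired B H p q
  for B :: "('b,'k::field) bialg" and H :: "('c,'k) bialg" and p q +
  fixes s :: "'b \<times> 'c \<Rightarrow> 'b \<times> 'c \<Rightarrow> 'k"
  assumes cqt_form_D: "cqt_form (gen_double B H p q) s"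
begin

abbreviation D where "D \<equiv> gen_double B H p q"

sublocale SD: cqt_structure D s
  by (rule cqt_structure.intro, rule cqt_form_D)

definition restrict_B :: "('b \<times> 'c \<Rightarrow> 'b \<times> 'c \<Rightarrow> 'k) \<Rightarrow> 'b \<Rightarrow> 'b \<Rightarrow> 'k" where
  "restrict_B t x x' = at_one H (\<lambda>k. at_one H (\<lambda>k'. t (x,k) (x',k')))"

definition restrict_H :: "('b \<times> 'c \<Rightarrow> 'b \<times> 'c \<Rightarrow> 'k) \<Rightarrow> 'c \<Rightarrow> 'c \<Rightarrow> 'k" where
  "restrict_H t y y' = at_one B (\<lambda>a. at_one B (\<lambda>a'. t (a,y) (a',y')))"

lemma restrict_B_swap: "restrict_B t x x' = at_one H (\<lambda>k'. at_one H (\<lambda>k. t (x,k) (x',k')))"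
  unfolding restrict_B_def by (rule at_one_swap)

lemma restrict_H_swap: "restrict_H t y y' = at_one B (\<lambda>a'. at_one B (\<lambda>a. t (a,y) (a',y')))"
  unfolding restrict_H_def by (rule at_one_swap)

lemma restrict_B_at_mult:
  "at_one H (\<lambda>k. at_one H (\<lambda>k'. at_mult D (x,k) (x',k') f)) = at_mult B x x' (\<lambda>e. at_one H (\<lambda>g. f (e,g)))"
  by (simp add: at_mult_gen_double H.at_one_sw sweedler_at_one_swap[symmetric] at_mult_at_one_swap[symmetric] mult.assoc)

lemma restrict_H_at_mult:
  "at_one B (\<lambda>a. at_one B (\<lambda>a'. at_mult D (a,y) (a',y') f)) = at_mult H y y' (\<lambda>g. at_one B (\<lambda>e. f (e,g)))"
  by (simp add: at_mult_gen_double B.at_one_sw sweedler_at_one_swap[symmetric] at_mult_at_one_swap[symmetric] mult.assoc)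

lemma conv_inverse_restrict_B:
  assumes "conv_inverse D D s t"
  shows "conv_inverse B B (restrict_B s) (restrict_B t)"
proof -
  have "conv B B (restrict_B f) (restrict_B g) x x' = at_one H (\<lambda>k. at_one H (\<lambda>k'. conv D D f g (x,k) (x',k')))"
    for f g x x'
    by (simp add: conv_eq_sw restrict_B_def H.at_one_sw sweedler_at_one_swap[symmetric])
  with assms show ?thesis
    by (simp add: conv_inverse_def)
qed

lemma conv_inverse_restrict_H:
  assumes "conv_inverse D D s t"
  shows "conv_inverse H H (restrict_H s) (restrict_H t)"
proof -
  have "conv H H (restrict_H f) (restrict_H g) y y' = at_one B (\<lambda>a. at_one B (\<lambda>a'. conv D D f g (a,y) (a',y')))"
    for f g y y'
    by (simp add: conv_eq_sw restrict_H_def B.at_one_sw sweedler_at_one_swap[symmetric])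
  with assms show ?thesis
    by (simp add: conv_inverse_def)
qed

lemma restrict_B_at_mult_swap:
  "at_one H (\<lambda>k'. at_one H (\<lambda>k. at_mult D (x,k) (x',k') f)) = at_mult B x x' (\<lambda>e. at_one H (\<lambda>g. f (e,g)))"
  by (subst at_one_swap) (rule restrict_B_at_mult)

lemma restrict_H_at_mult_swap:
  "at_one B (\<lambda>a'. at_one B (\<lambda>a. at_mult D (a,y) (a',y') f)) = at_mult H y y' (\<lambda>g. at_one B (\<lambda>e. f (e,g)))"
  by (subst at_one_swap) (rule restrict_H_at_mult)

lemma at_mult_B_via_D:
  "at_mult B x x' (\<lambda>e. at_one H (F e)) = at_one H (\<lambda>k. at_one H (\<lambda>k'. at_mult D (x,k) (x',k') (\<lambda>W. F (fst W) (snd W))))"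
  using restrict_B_at_mult[of x x' "\<lambda>W. F (fst W) (snd W)"] by simp

lemma at_mult_H_via_D:
  "at_mult H y y' (\<lambda>g. at_one B (\<lambda>e. F e g)) = at_one B (\<lambda>a. at_one B (\<lambda>a'. at_mult D (a,y) (a',y') (\<lambda>W. F (fst W) (snd W))))"
  using restrict_H_at_mult[of y y' "\<lambda>W. F (fst W) (snd W)"] by simp

lemma restrict_B_mult_left: "at_mult B h h' (\<lambda>a. restrict_B s a g) = sw B g (\<lambda>c d. restrict_B s h c * restrict_B s h' d)"
proof -
  have "at_mult B h h' (\<lambda>a. restrict_B s a g) = at_one H (\<lambda>k1. at_one H (\<lambda>k2. at_one H (\<lambda>k'.
      at_mult D (h,k1) (h',k2) (\<lambda>W. s W (g,k')))))"
    unfolding restrict_B_def by (simp only: at_mult_B_via_D prod.collapse, simp only: at_mult_at_one_swap)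
  also have "\<dots> = at_one H (\<lambda>k1. at_one H (\<lambda>k2. at_one H (\<lambda>k'. sw D (g,k') (\<lambda>c d. s (h,k1) c * s (h',k2) d))))"
    by (simp only: SD.form_mult_left)
  also have "\<dots> = sw B g (\<lambda>c d. restrict_B s h c * restrict_B s h' d)"
    by (simp add: restrict_B_def H.at_one_sw sweedler_at_one_swap[symmetric])
  finally show ?thesis .
qed

lemma restrict_B_mult_right: "at_mult B h h' (restrict_B s g) = sw B g (\<lambda>a b. restrict_B s b h * restrict_B s a h')"
proof -
  have "at_mult B h h' (restrict_B s g) = at_one H (\<lambda>k1. at_one H (\<lambda>k2. at_one H (\<lambda>k.
      at_mult D (h,k1) (h',k2) (s (g,k)))))"
    unfolding restrict_B_swap by (simp only: at_mult_B_via_D prod.collapse, simp only: at_mult_at_one_swap)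
  also have "\<dots> = at_one H (\<lambda>k1. at_one H (\<lambda>k2. at_one H (\<lambda>k. sw D (g,k) (\<lambda>a b. s b (h,k1) * s a (h',k2)))))"
    by (simp only: SD.form_mult_right)
  also have "\<dots> = sw B g (\<lambda>a b. restrict_B s b h * restrict_B s a h')"
    by (simp add: restrict_B_swap H.at_one_sw sweedler_at_one_swap[symmetric])
  finally show ?thesis .
qed

lemma restrict_B_one_left: "at_one B (\<lambda>a. restrict_B s a h) = counit B h"
proof -
  have "at_one B (\<lambda>a. restrict_B s a h) = at_one H (\<lambda>k'. at_one D (\<lambda>W. s W (h,k')))"
    by (simp add: restrict_B_swap at_one_gen_double at_one_swap[of B H])
  then show ?thesis by simp
qed

lemma restrict_B_one_right: "at_one B (restrict_B s h) = counit B h"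
proof -
  have "at_one B (restrict_B s h) = at_one H (\<lambda>k. at_one D (s (h,k)))"
    by (simp add: restrict_B_def[abs_def] at_one_gen_double at_one_swap[of B H])
  then show ?thesis by simp
qed

lemma restrict_B_braiding:
  "sw B h (\<lambda>a b. sw B h' (\<lambda>c d. restrict_B s a c * at_mult B b d f))
 = sw B h (\<lambda>a b. sw B h' (\<lambda>c d. restrict_B s b d * at_mult B c a f))"
proof -
  define F where "F = (\<lambda>W. f (fst W) * counit H (snd W))"
  have "at_one H (\<lambda>k. at_one H (\<lambda>k'. sw D (h,k) (\<lambda>X Y. sw D (h',k') (\<lambda>X' Y'. s X X' * at_mult D Y Y' F))))
      = at_one H (\<lambda>k. at_one H (\<lambda>k'. sw D (h,k) (\<lambda>X Y. sw D (h',k') (\<lambda>X' Y'. s Y Y' * at_mult D X' X F))))"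
    by (simp only: SD.braiding)
  then show ?thesis
    by (simp add: H.at_one_sw sweedler_at_one_swap[symmetric] restrict_B_at_mult restrict_B_at_mult_swap
        restrict_B_def F_def)
qed

theorem cqt_form_restrict_B: "cqt_form B (restrict_B s)"
proof -
  obtain t where "conv_inverse D D s t"
    using cqt_form_D by (auto simp: cqt_form_def conv_invertible_def)
  then show ?thesis
    by (rule cqt_formI[OF conv_inverse_restrict_B restrict_B_mult_left restrict_B_mult_right
          restrict_B_one_left restrict_B_one_right restrict_B_braiding])
qed

lemma restrict_H_mult_left: "at_mult H h h' (\<lambda>a. restrict_H s a g) = sw H g (\<lambda>c d. restrict_H s h c * restrict_H s h' d)"
proof -
  have "at_mult H h h' (\<lambda>a. restrict_H s a g) = at_one B (\<lambda>k1. at_one B (\<lambda>k2. at_one B (\<lambda>k'.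
      at_mult D (k1,h) (k2,h') (\<lambda>W. s W (k',g)))))"
    unfolding restrict_H_def by (simp only: at_mult_H_via_D prod.collapse, simp only: at_mult_at_one_swap)
  also have "\<dots> = at_one B (\<lambda>k1. at_one B (\<lambda>k2. at_one B (\<lambda>k'. sw D (k',g) (\<lambda>c d. s (k1,h) c * s (k2,h') d))))"
    by (simp only: SD.form_mult_left)
  also have "\<dots> = sw H g (\<lambda>c d. restrict_H s h c * restrict_H s h' d)"
    by (simp add: restrict_H_def B.at_one_sw sweedler_at_one_swap[symmetric])
  finally show ?thesis .
qed

lemma restrict_H_mult_right: "at_mult H h h' (restrict_H s g) = sw H g (\<lambda>a b. restrict_H s b h * restrict_H s a h')"
proof -
  have "at_mult H h h' (restrict_H s g) = at_one B (\<lambda>k1. at_one B (\<lambda>k2. at_one B (\<lambda>k.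
      at_mult D (k1,h) (k2,h') (s (k,g)))))"
    unfolding restrict_H_swap by (simp only: at_mult_H_via_D prod.collapse, simp only: at_mult_at_one_swap)
  also have "\<dots> = at_one B (\<lambda>k1. at_one B (\<lambda>k2. at_one B (\<lambda>k. sw D (k,g) (\<lambda>a b. s b (k1,h) * s a (k2,h')))))"
    by (simp only: SD.form_mult_right)
  also have "\<dots> = sw H g (\<lambda>a b. restrict_H s b h * restrict_H s a h')"
    by (simp add: restrict_H_swap B.at_one_sw sweedler_at_one_swap[symmetric])
  finally show ?thesis .
qed

lemma restrict_H_one_left: "at_one H (\<lambda>a. restrict_H s a h) = counit H h"
proof -
  have "at_one H (\<lambda>a. restrict_H s a h) = at_one B (\<lambda>k'. at_one D (\<lambda>W. s W (k',h)))"
    by (simp add: restrict_H_swap at_one_gen_double at_one_swap[of H B])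
  then show ?thesis by simp
qed

lemma restrict_H_one_right: "at_one H (restrict_H s h) = counit H h"
proof -
  have "at_one H (restrict_H s h) = at_one B (\<lambda>k. at_one D (s (k,h)))"
    by (simp add: restrict_H_def[abs_def] at_one_gen_double at_one_swap[of H B])
  then show ?thesis by simp
qed

lemma restrict_H_braiding:
  "sw H h (\<lambda>a b. sw H h' (\<lambda>c d. restrict_H s a c * at_mult H b d f))
 = sw H h (\<lambda>a b. sw H h' (\<lambda>c d. restrict_H s b d * at_mult H c a f))"
proof -
  define F where "F = (\<lambda>W. counit B (fst W) * f (snd W))"
  have "at_one B (\<lambda>k. at_one B (\<lambda>k'. sw D (k,h) (\<lambda>X Y. sw D (k',h') (\<lambda>X' Y'. s X X' * at_mult D Y Y' F))))
      = at_one B (\<lambda>k. at_one B (\<lambda>k'. sw D (k,h) (\<lambda>X Y. sw D (k',h') (\<lambda>X' Y'. s Y Y' * at_mult D X' X F))))"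
    by (simp only: SD.braiding)
  then show ?thesis
    by (simp add: B.at_one_sw sweedler_at_one_swap[symmetric] restrict_H_at_mult restrict_H_at_mult_swap
        restrict_H_def F_def)
qed

theorem cqt_form_restrict_H: "cqt_form H (restrict_H s)"
proof -
  obtain t where "conv_inverse D D s t"
    using cqt_form_D by (auto simp: cqt_form_def conv_invertible_def)
  then show ?thesis
    by (rule cqt_formI[OF conv_inverse_restrict_H restrict_H_mult_left restrict_H_mult_right
          restrict_H_one_left restrict_H_one_right restrict_H_braiding])
qed

end

context skew_paired
begin

lemma coquasitriangular_factors:
  assumes "coquasitriangular (gen_double B H p q)"
  shows "coquasitriangular B \<and> coquasitriangular H"
proof -
  obtain s where "cqt_form (gen_double B H p q) s"
    using assms by (auto simp: coquasitriangular_def)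
  then interpret cqt_double B H p q s
    by unfold_locales
  show ?thesis
    unfolding coquasitriangular_def using cqt_form_restrict_B cqt_form_restrict_H by blast
qed

lemma coquasitriangular_gen_double:
  assumes "coquasitriangular B" and "coquasitriangular H"
  shows "coquasitriangular (gen_double B H p q)"
proof -
  obtain sB sH where sB: "cqt_form B sB" and sH: "cqt_form H sH"
    using assms by (auto simp: coquasitriangular_def)
  then obtain tB tH where "conv_inverse B B sB tB" and "conv_inverse H H sH tH"
    by (auto simp: cqt_form_def conv_invertible_def)
  with sB sH interpret cqt_factors B H p q sB sH tB tH
    by (simp add: cqt_factors_def cqt_factors_axioms_def cqt_structure_def skew_paired_axioms)
  show ?thesis
    unfolding coquasitriangular_def using cqt_form_gen_double by blast
qed

end

theorem proposition1p8:
  fixes B :: "('b,'k::field) bialg" and H :: "('c,'k) bialg"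
    and p q :: "'b \<Rightarrow> 'c \<Rightarrow> 'k"
  assumes "hopf_algebra B" and "hopf_algebra H"
    and "skew_pairing B H p"
    and "conv_inverse B H p q"
  shows "coquasitriangular (gen_double B H p q) \<longleftrightarrow>
         coquasitriangular B \<and> coquasitriangular H"
proof -
  interpret skew_paired B H p q
    using assms by (simp add: skew_paired_def skew_paired_axioms_def bialgebra_structure_def hopf_algebra_def)
  show ?thesis
    using coquasitriangular_factors coquasitriangular_gen_double by blast
qed

end
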